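(* A Q-net $f:\mathbb Z^m\to\mathbb R^N$ ($m\ge2$) is a discrete Koenigs net if and only if the multiplicative one-form $q$ of ratios of diagonal segments is closed on both the black graph and the white graph of $\mathbb Z^m$.
   Context: Let $N\ge 3$, $m\ge 2$. For a map $f:\mathbb Z^m\to\mathbb R^N$, write $e_i$ for the $i$-th unit vector of $\mathbb Z^m$, $f=f(u)$, $f_i=f(u+e_i)$, $f_{ij}=f(u+e_i+e_j)$; negative indices denote backward shifts, e.g. $f_{-1}=f(u-e_1)$, $f_{1,-2}=f(u+e_1-e_2)$; $\delta_i f=f_i-f$, and $\tau_i g(u)=g(u+e_i)$ for any function $g$ on $\mathbb Z^m$. A Q-net is a map $f:\mathbb Z^m\to\mathbb R^N$ such that for every $u$ and $i\ne j$ the elementary quadrilateral $(f,f_i,f_{ij},f_j)$ is planar; elementary quadrilaterals are assumed non-degenerate: four distinct vertices, no three collinear, and the diagonals $(ff_{ij})$, $(f_if_j)$ meet in a point $M$ different from all vertices. Two planar quadrilaterals $(A,B,C,D)$, $(A^*,B^*,C^*,D^* )$ are dual if corresponding sides are parallel ($A^*B^*\parallel AB$, $B^*C^*\parallel BC$, $C^*D^*\parallel CD$, $D^*A^*\parallel DA$) and non-corresponding diagonals are parallel ($A^*C^*\parallel BD$, $B^*D^*\parallel AC$). A Q-net $f$ is a discrete Koenigs net if there is a Q-net $f^*:\mathbb Z^m\to\mathbb R^N$ (a dual net) such that each $(f^*,f^*_i,f^*_{ij},f^*_j)$ is dual to $(f,f_i,f_{ij},f_j)$, i.e. $\delta_if^*\parallel\delta_if$,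 $\delta_jf^*\parallel\delta_jf$, $f^*_{ij}-f^*\parallel f_i-f_j$, $f^*_i-f^*_j\parallel f_{ij}-f$. For collinear points $P,Q$, $l(P,Q)$ denotes the directed (signed) length along their line (ratios of such lengths on one line are orientation-independent). Color $u\in\mathbb Z^m$ black if $u_1+\dots+u_m$ is even and white otherwise. Each elementary square $(u,u+e_i,u+e_i+e_j,u+e_j)$ has one diagonal joining two black points and one joining two white points. The black (resp. white) graph has as vertices the black (resp. white) points of $\mathbb Z^m$ and as edges the black (resp. white) diagonals of all elementary squares. For a Q-net $f$ and the quadrilateral $(f,f_i,f_{ij},f_j)$ with diagonal intersection $M$, set $q(u\to u+e_i+e_j)=l(M,f_{ij})/l(M,f)$ and $q(u+e_i\to u+e_j)=l(M,f_j)/l(M,f_i)$, with reversed direction giving the reciprocal value. A function $q$ on directed edges of a graph with $q(-e)=1/q(e)$ is a multiplicative one-form; it is closed if its product along every closed cycle of directed edges equals $1$. *)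

theory Defs
  imports "HOL-Analysis.Analysis"
begin

text \<open>Lattice points of Z^m are vectors of type int^'m (m = CARD('m)),
  points of R^N are vectors of type real^'n (N = CARD('n)).\<close>

definition ue :: "'m::finite \<Rightarrow> int^'m" where
  "ue i = axis i 1"

definition line_thr :: "real^'n \<Rightarrow> real^'n \<Rightarrow> (real^'n) set" where
  "line_thr P Q = affine hull {P, Q}"

definition nondeg_planar_quad :: "real^'n \<Rightarrow> real^'n \<Rightarrow> real^'n \<Rightarrow> real^'n \<Rightarrow> bool" where
  "nondeg_planar_quad A B C D \<longleftrightarrow>
     coplanar {A, B, C, D} \<and>
     distinct [A, B, C, D] \<and>
     \<not> collinear {A, B, C} \<and> \<not> collinear {A, B, D} \<and>
     \<not> collinear {A, C, D} \<and> \<not> collinear {B, C, D} \<and>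
     (\<exists>M. M \<in> line_thr A C \<and> M \<in> line_thr B D \<and> M \<notin> {A, B, C, D})"

definition diag_int :: "real^'n \<Rightarrow> real^'n \<Rightarrow> real^'n \<Rightarrow> real^'n \<Rightarrow> real^'n" where
  "diag_int A B C D = (THE M. M \<in> line_thr A C \<and> M \<in> line_thr B D)"

definition is_Qnet :: "(int^'m::finite \<Rightarrow> real^'n::finite) \<Rightarrow> bool" where
  "is_Qnet f \<longleftrightarrow> (\<forall>u i j. i \<noteq> j \<longrightarrow>
     nondeg_planar_quad (f u) (f (u + ue i)) (f (u + ue i + ue j)) (f (u + ue j)))"

definition par :: "real^'n \<Rightarrow> real^'n \<Rightarrow> bool" where
  "par v w \<longleftrightarrow> (\<exists>c::real. v = c *\<^sub>R w)"

definition dual_quad :: "real^'n \<Rightarrow> real^'n \<Rightarrow> real^'n \<Rightarrow> real^'n \<Rightarrow>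
    real^'n \<Rightarrow> real^'n \<Rightarrow> real^'n \<Rightarrow> real^'n \<Rightarrow> bool" where
  "dual_quad A B C D A' B' C' D' \<longleftrightarrow>
     par (B' - A') (B - A) \<and> par (C' - B') (C - B) \<and>
     par (D' - C') (D - C) \<and> par (A' - D') (A - D) \<and>
     par (C' - A') (D - B) \<and> par (D' - B') (C - A)"

definition is_Koenigs :: "(int^'m::finite \<Rightarrow> real^'n::finite) \<Rightarrow> bool" where
  "is_Koenigs f \<longleftrightarrow> (\<exists>fs :: int^'m \<Rightarrow> real^'n. is_Qnet fs \<and>
     (\<forall>u i j. i \<noteq> j \<longrightarrow>
        dual_quad (f u) (f (u + ue i)) (f (u + ue i + ue j)) (f (u + ue j))
                  (fs u) (fs (u + ue i)) (fs (u + ue i + ue j)) (fs (u + ue j))))"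

text \<open>Ratio of directed lengths l(M,P)/l(M,Q) for collinear M,P,Q with Q \<noteq> M.\<close>
definition sratio :: "real^'n \<Rightarrow> real^'n \<Rightarrow> real^'n \<Rightarrow> real" where
  "sratio M P Q = (THE t. P - M = t *\<^sub>R (Q - M))"

definition sqM :: "(int^'m::finite \<Rightarrow> real^'n) \<Rightarrow> int^'m \<Rightarrow> 'm \<Rightarrow> 'm \<Rightarrow> real^'n" where
  "sqM f u i j = diag_int (f u) (f (u + ue i)) (f (u + ue i + ue j)) (f (u + ue j))"

definition diag_edge :: "int^'m::finite \<Rightarrow> int^'m \<Rightarrow> bool" where
  "diag_edge a b \<longleftrightarrow> (\<exists>u i j. i \<noteq> j \<and>
     ({a, b} = {u, u + ue i + ue j} \<or> {a, b} = {u + ue i, u + ue j}))"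

text \<open>The multiplicative one-form q on the directed diagonal edge a \<rightarrow> b:
  q(a \<rightarrow> b) = l(M, f b) / l(M, f a), M the diagonal intersection of the
  elementary quadrilateral containing the diagonal.\<close>
definition qform :: "(int^'m::finite \<Rightarrow> real^'n) \<Rightarrow> int^'m \<Rightarrow> int^'m \<Rightarrow> real" where
  "qform f a b = (THE x. \<exists>u i j. i \<noteq> j \<and>
     ({a, b} = {u, u + ue i + ue j} \<or> {a, b} = {u + ue i, u + ue j}) \<and>
     x = sratio (sqM f u i j) (f b) (f a))"

definition black :: "int^'m::finite \<Rightarrow> bool" where
  "black u \<longleftrightarrow> even (\<Sum>k\<in>UNIV. u $ k)"

definition white :: "int^'m::finite \<Rightarrow> bool" where
  "white u \<longleftrightarrow> odd (\<Sum>k\<in>UNIV. u $ k)"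

definition closed_on :: "(int^'m::finite \<Rightarrow> bool) \<Rightarrow> (int^'m \<Rightarrow> real^'n) \<Rightarrow> bool" where
  "closed_on col f \<longleftrightarrow> (\<forall>vs. vs \<noteq> [] \<longrightarrow> hd vs = last vs \<longrightarrow>
     (\<forall>v\<in>set vs. col v) \<longrightarrow>
     (\<forall>k. Suc k < length vs \<longrightarrow> diag_edge (vs ! k) (vs ! Suc k)) \<longrightarrow>
     prod_list (map (\<lambda>(a, b). qform f a b) (zip vs (tl vs))) = 1)"

end

(*
  Write r1(u,i,j), r2(u,i,j) (diag_ratio1, diag_ratio2 below) for the ratios in
  which the diagonal intersection M of the elementary quadrilateral
  (f, f_i, f_ij, f_j) divides its two diagonals; they are the values of q on the
  two diagonals of the square.  Both directions of the theorem pass through the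
  statement "q is exact": there is a nowhere vanishing vertex function Q with
  q(a -> b) = Q a / Q b on every diagonal edge.
   * exact ==> closed: products of q along closed walks telescope.
   * closed ==> exact: the black and the white graph are connected, so
     integrating q along walks from a base point gives Q on each colour class.
   * Koenigs ==> exact: the dual net satisfies d_k f* = lambda_k d_k f; the
     parallelism conditions of a dual square become linear relations between
     r1, r2 and lambda, which make lambda a "checkerboard product"
     Q(x) Q(x + e_k) of a vertex function Q.
   * exact ==> Koenigs: the vector form (Q Q_k) d_k f is closed, so it has a
     primitive f*, and f* is a Q-net dual to f.
*)
theory Submission
  imports Defs
begin

section \<open>The lattice Z^m\<close>

lemma ue_nth: "ue i $ k = (if k = i then 1 else 0)"
  by (simp add: ue_def axis_def)

definition coord_sum :: "int^'m::finite \<Rightarrow> int" where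
  "coord_sum x = (\<Sum>k\<in>UNIV. x $ k)"

lemma coord_sum_add: "coord_sum (x + y) = coord_sum x + coord_sum y"
  by (simp add: coord_sum_def sum.distrib)

lemma coord_sum_diff: "coord_sum (x - y) = coord_sum x - coord_sum y"
  by (simp add: coord_sum_def sum_subtractf)

lemma coord_sum_axis: "coord_sum (axis i s) = s"
  by (simp add: coord_sum_def axis_def)

lemma coord_sum_ue: "coord_sum (ue i) = 1"
  by (simp add: ue_def coord_sum_axis)

lemma black_iff: "black x \<longleftrightarrow> even (coord_sum x)"
  by (simp add: black_def coord_sum_def)

lemma white_iff_not_black: "white x \<longleftrightarrow> \<not> black x"
  by (simp add: white_def black_def)

lemma black_add_ue: "black (x + ue k) \<longleftrightarrow> \<not> black x"
  by (simp add: black_iff coord_sum_add coord_sum_ue)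

lemma exists_other_direction:
  assumes "CARD('m::finite) \<ge> 2"
  shows "\<exists>j::'m. j \<noteq> k"
proof (rule ccontr)
  assume "\<not> ?thesis"
  then have "(UNIV::'m set) = {k}" by auto
  then have "CARD('m) = card {k}" by (rule arg_cong)
  then show False using assms by simp
qed

text \<open>A diagonal of an elementary square determines the square: the sum of its
  endpoints is 2u + e_i + e_j for both kinds of diagonal, and this determines
  u and the pair {i, j} by a parity argument.\<close>
lemma square_centre_unique:
  fixes u u' :: "int^'m::finite"
  assumes "u + u + ue i + ue j = u' + u' + ue i' + ue j'" "i \<noteq> j" "i' \<noteq> j'"
  shows "u' = u \<and> {i', j'} = {i, j}"
proof -
  have h: "2 * u $ k + (if k = i then 1 else 0) + (if k = j then 1 else 0)
         = 2 * u' $ k + (if k = i' then 1 else 0) + (if k = j' then (1::int) else 0)" for k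
    using arg_cong[OF assms(1), of "\<lambda>v. v $ k"] by (simp add: ue_nth)
  have "i \<in> {i', j'}" using h[of i] assms(2,3) by (auto split: if_splits) presburger+
  moreover have "j \<in> {i', j'}" using h[of j] assms(2,3) by (auto split: if_splits) presburger+
  ultimately have ij: "{i', j'} = {i, j}" using assms(2,3) by auto
  have "u' $ k = u $ k" for k
    using h[of k] ij assms(2,3) by (auto simp: doubleton_eq_iff split: if_splits)
  then show ?thesis using ij by (simp add: vec_eq_iff)
qed

lemma diag_endpoints_sum:
  assumes "{a, b} = {u, u + ue i + ue j} \<or> {a, b} = {u + ue i, u + ue j}"
  shows "a + b = u + u + ue i + ue j"
  using assms by (auto simp: doubleton_eq_iff algebra_simps)

lemma diag_edgeE:
  assumes "diag_edge a b"
  obtains u i j where "i \<noteq> j" "a = u" "b = u + ue i + ue j"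
    | u i j where "i \<noteq> j" "a = u + ue i + ue j" "b = u"
    | u i j where "i \<noteq> j" "a = u + ue i" "b = u + ue j"
    | u i j where "i \<noteq> j" "a = u + ue j" "b = u + ue i"
  using assms unfolding diag_edge_def by (auto simp: doubleton_eq_iff)

lemma diag_edge_main: "i \<noteq> j \<Longrightarrow> diag_edge u (u + ue i + ue j)"
  unfolding diag_edge_def by blast

lemma diag_edge_cross: "i \<noteq> j \<Longrightarrow> diag_edge (u + ue i) (u + ue j)"
  unfolding diag_edge_def by blast

lemma diag_edge_sym: "diag_edge a b \<Longrightarrow> diag_edge b a"
  unfolding diag_edge_def by (simp add: insert_commute)

lemma diag_edge_shift:
  assumes "diag_edge a b"
  shows "diag_edge (a + t) (b + t)"
  using assms
proof (cases rule: diag_edgeE)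
  case (1 u i j)
  then show ?thesis using diag_edge_main[OF 1(1), of "u + t"] by (simp add: add_ac)
next
  case (2 u i j)
  then show ?thesis using diag_edge_sym[OF diag_edge_main[OF 2(1), of "u + t"]] by (simp add: add_ac)
next
  case (3 u i j)
  then show ?thesis using diag_edge_cross[OF 3(1), of "u + t"] by (simp add: add_ac)
next
  case (4 u i j)
  then show ?thesis using diag_edge_sym[OF diag_edge_cross[OF 4(1), of "u + t"]] by (simp add: add_ac)
qed

lemma diag_edge_black: "diag_edge a b \<Longrightarrow> black a \<longleftrightarrow> black b"
  by (erule diag_edgeE) (simp_all add: black_add_ue)

section \<open>Discrete integration on Z^m\<close>

lemma int_primitive_add:
  fixes \<phi> :: "int \<Rightarrow> 'a::ab_group_add"
  shows "\<exists>T. T 0 = 0 \<and> (\<forall>n. T (n + 1) = T n + \<phi> n)"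
proof -
  define T where "T n = (if 0 \<le> n then (\<Sum>s<nat n. \<phi> (int s))
                         else - (\<Sum>s<nat (-n). \<phi> (- int s - 1)))" for n
  have "T (n + 1) = T n + \<phi> n" for n
  proof (cases "0 \<le> n")
    case True
    then have "nat (n + 1) = Suc (nat n)" by simp
    then show ?thesis using True by (simp add: T_def)
  next
    case neg: False
    show ?thesis
    proof (cases "n = -1")
      case False
      have "nat (-n) = Suc (nat (-n - 1))" "- int (nat (-n - 1)) - 1 = n" "nat (- 1 - n) = nat (-n - 1)"
        using neg False by simp_all
      then show ?thesis using neg False by (simp add: T_def algebra_simps)
    qed (simp add: T_def)
  qed
  then show ?thesis by (intro exI[of _ T]) (simp add: T_def)
qed

lemma int_primitive_mult:
  fixes \<phi> :: "int \<Rightarrow> 'a::field"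
  assumes "\<And>n. \<phi> n \<noteq> 0"
  shows "\<exists>T. T 0 = 1 \<and> (\<forall>n. T n \<noteq> 0) \<and> (\<forall>n. T (n + 1) = T n * \<phi> n)"
proof -
  define T where "T n = (if 0 \<le> n then (\<Prod>s<nat n. \<phi> (int s))
                         else inverse (\<Prod>s<nat (-n). \<phi> (- int s - 1)))" for n
  have "T (n + 1) = T n * \<phi> n" for n
  proof (cases "0 \<le> n")
    case True
    then have "nat (n + 1) = Suc (nat n)" by simp
    then show ?thesis using True by (simp add: T_def)
  next
    case neg: False
    show ?thesis
    proof (cases "n = -1")
      case False
      have "nat (-n) = Suc (nat (-n - 1))" "- int (nat (-n - 1)) - 1 = n" "nat (- 1 - n) = nat (-n - 1)"
        using neg False by simp_all
      moreover have "(\<Prod>s<nat (-n - 1). \<phi> (- int s - 1)) \<noteq> 0"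
        using assms by (simp add: prod_zero_iff)
      ultimately show ?thesis using neg False assms[of n] by (simp add: T_def field_simps)
    qed (use assms in \<open>simp add: T_def\<close>)
  qed
  moreover have "T n \<noteq> 0" for n using assms by (simp add: T_def prod_zero_iff)
  ultimately show ?thesis by (intro exI[of _ T]) (simp add: T_def)
qed

lemma int_eq_by_increments:
  fixes h1 h2 :: "int \<Rightarrow> 'a::ab_group_add"
  assumes "h1 0 = h2 0" "\<And>n. h1 (n + 1) - h1 n = h2 (n + 1) - h2 n"
  shows "h1 n = h2 n"
proof (induction n rule: int_induct[where k = 0])
  case (step1 i)
  have "h1 (i + 1) = (h2 (i + 1) - h2 i) + h1 i" using assms(2)[of i] by (metis diff_add_cancel)
  then show ?case using step1 by simp
next
  case (step2 i)
  have "h1 (i - 1) = h1 i - (h2 i - h2 (i - 1))" using assms(2)[of "i - 1"] by (simp add: algebra_simps)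
  then show ?case using step2 by simp
qed (rule assms(1))

lemma int_eq_by_quotients:
  fixes h1 h2 :: "int \<Rightarrow> 'a::field"
  assumes "h1 0 = h2 0" "\<And>n. h1 (n + 1) = h1 n * c n" "\<And>n. h2 (n + 1) = h2 n * c n" "\<And>n. c n \<noteq> 0"
  shows "h1 n = h2 n"
proof (induction n rule: int_induct[where k = 0])
  case (step1 i) then show ?case using assms(2,3)[of i] by simp
next
  case (step2 i) then show ?case using assms(2-4)[of "i - 1"] by simp
qed (rule assms(1))

text \<open>Projection onto the coordinates in S; potentials on Z^m are built one
  coordinate direction at a time, as functions factoring through coord_proj S.\<close>
definition coord_proj :: "'m set \<Rightarrow> int^'m::finite \<Rightarrow> int^'m" where
  "coord_proj S x = (\<chi> k. if k \<in> S then x $ k else 0)"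

lemma coord_proj_nth: "coord_proj S x $ k = (if k \<in> S then x $ k else 0)"
  by (simp add: coord_proj_def)

lemma coord_proj_UNIV: "coord_proj UNIV x = x"
  by (simp add: vec_eq_iff coord_proj_def)

lemma coord_proj_add_in: "j \<in> S \<Longrightarrow> coord_proj S (x + ue j) = coord_proj S x + ue j"
  by (auto simp add: vec_eq_iff coord_proj_def ue_nth)

lemma coord_proj_add_out: "j \<notin> S \<Longrightarrow> coord_proj S (x + ue j) = coord_proj S x"
  by (auto simp add: vec_eq_iff coord_proj_def ue_nth)

lemma coord_proj_proj: "S \<subseteq> T \<Longrightarrow> coord_proj S (coord_proj T x) = coord_proj S x"
  by (auto simp add: vec_eq_iff coord_proj_def)

lemma coord_proj_insert:
  "k \<notin> S \<Longrightarrow> coord_proj (insert k S) x = coord_proj S x + axis k (x $ k)"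
  by (auto simp add: vec_eq_iff coord_proj_def axis_def)

lemma axis_zero: "axis k 0 = 0"
  by simp

lemma axis_succ: "axis k (n + 1) = axis k n + ue k"
  by (auto simp add: vec_eq_iff axis_def ue_nth)

lemma line_primitive_shift_add:
  fixes \<omega> :: "int^'m::finite \<Rightarrow> 'm \<Rightarrow> 'a::ab_group_add"
  assumes closed: "\<And>x i j. \<omega> x i + \<omega> (x + ue i) j = \<omega> x j + \<omega> (x + ue j) i"
    and T0: "\<And>y. T y 0 = 0" and T1: "\<And>y n. T y (n + 1) = T y n + \<omega> (y + axis k n) k"
  shows "T (y + ue j) n = T y n + \<omega> (y + axis k n) j - \<omega> y j"
proof (rule int_eq_by_increments)
  fix n
  have a1: "y + axis k n + ue k = y + axis k (n + 1)" by (simp add: axis_succ add.assoc)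
  have a2: "y + axis k n + ue j = y + ue j + axis k n" by (simp add: add_ac)
  show "T (y + ue j) (n + 1) - T (y + ue j) n =
      T y (n + 1) + \<omega> (y + axis k (n + 1)) j - \<omega> y j - (T y n + \<omega> (y + axis k n) j - \<omega> y j)"
    using closed[of "y + axis k n" k j] unfolding a1 a2 T1 by (simp add: algebra_simps)
qed (simp add: T0 axis_zero)

lemma line_primitive_shift_mult:
  fixes \<omega> :: "int^'m::finite \<Rightarrow> 'm \<Rightarrow> 'a::field"
  assumes nz: "\<And>x i. \<omega> x i \<noteq> 0"
    and closed: "\<And>x i j. \<omega> x i * \<omega> (x + ue i) j = \<omega> x j * \<omega> (x + ue j) i"
    and T0: "\<And>y. T y 0 = 1" and T1: "\<And>y n. T y (n + 1) = T y n * \<omega> (y + axis k n) k"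
  shows "T (y + ue j) n = T y n * \<omega> (y + axis k n) j / \<omega> y j"
proof (rule int_eq_by_quotients[where c = "\<lambda>n. \<omega> (y + ue j + axis k n) k"])
  fix n
  have a1: "y + axis k n + ue k = y + axis k (n + 1)" by (simp add: axis_succ add.assoc)
  have a2: "y + axis k n + ue j = y + ue j + axis k n" by (simp add: add_ac)
  show "T y (n + 1) * \<omega> (y + axis k (n + 1)) j / \<omega> y j =
      T y n * \<omega> (y + axis k n) j / \<omega> y j * \<omega> (y + ue j + axis k n) k"
    using closed[of "y + axis k n" k j] unfolding a1 a2 T1 by (simp add: algebra_simps)
qed (use nz T0 T1 in \<open>simp_all add: axis_zero\<close>)

lemma potential_add_extend:
  fixes \<omega> :: "int^'m::finite \<Rightarrow> 'm \<Rightarrow> 'a::ab_group_add"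
  assumes closed: "\<And>x i j. \<omega> x i + \<omega> (x + ue i) j = \<omega> x j + \<omega> (x + ue j) i"
    and k: "k \<notin> S"
    and G_proj: "\<And>x. G x = G (coord_proj S x)"
    and G_step: "\<And>x j. j \<in> S \<Longrightarrow> G (x + ue j) = G x + \<omega> (coord_proj S x) j"
  shows "\<exists>G'. (\<forall>x. G' x = G' (coord_proj (insert k S) x)) \<and>
    (\<forall>x j. j \<in> insert k S \<longrightarrow> G' (x + ue j) = G' x + \<omega> (coord_proj (insert k S) x) j)"
proof -
  have "\<forall>y. \<exists>T. T 0 = 0 \<and> (\<forall>n. T (n + 1) = T n + \<omega> (y + axis k n) k)"
    by (intro allI int_primitive_add)
  then obtain T where T0: "\<And>y. T y 0 = 0" and T1: "\<And>y n. T y (n + 1) = T y n + \<omega> (y + axis k n) k"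
    by metis
  have T_shift: "T (y + ue j) n = T y n + \<omega> (y + axis k n) j - \<omega> y j" for y j n
    by (rule line_primitive_shift_add[OF closed T0 T1])
  define G' where "G' x = G x + T (coord_proj S x) (x $ k)" for x
  have "G' x = G' (coord_proj (insert k S) x)" for x
    unfolding G'_def using G_proj[of x] G_proj[of "coord_proj (insert k S) x"]
    by (simp add: coord_proj_proj[of S "insert k S"] coord_proj_nth subset_insertI)
  moreover have "G' (x + ue j) = G' x + \<omega> (coord_proj (insert k S) x) j" if "j \<in> insert k S" for x j
  proof (cases "j = k")
    case True
    have "G (x + ue k) = G x" using G_proj[of "x + ue k"] G_proj[of x] coord_proj_add_out[OF k] by simp
    then show ?thesis using True T1[of "coord_proj S x" "x $ k"]
      by (simp add: G'_def coord_proj_add_out[OF k] T1 coord_proj_insert[OF k] ue_nth algebra_simps)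
  next
    case False
    then have j: "j \<in> S" and xk: "(x + ue j) $ k = x $ k" using that by (simp_all add: ue_nth)
    have "G' (x + ue j) = G (x + ue j) + T (coord_proj S x + ue j) (x $ k)"
      unfolding G'_def coord_proj_add_in[OF j] xk ..
    also have "\<dots> = G x + \<omega> (coord_proj S x) j
        + (T (coord_proj S x) (x $ k) + \<omega> (coord_proj S x + axis k (x $ k)) j - \<omega> (coord_proj S x) j)"
      unfolding G_step[OF j] T_shift ..
    also have "\<dots> = G' x + \<omega> (coord_proj (insert k S) x) j"
      unfolding G'_def coord_proj_insert[OF k] by (simp add: algebra_simps)
    finally show ?thesis .
  qed
  ultimately show ?thesis by blast
qed

lemma closed_form_primitive_add:
  fixes \<omega> :: "int^'m::finite \<Rightarrow> 'm \<Rightarrow> 'a::ab_group_add"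
  assumes closed: "\<And>x i j. \<omega> x i + \<omega> (x + ue i) j = \<omega> x j + \<omega> (x + ue j) i"
  shows "\<exists>F. \<forall>x k. F (x + ue k) = F x + \<omega> x k"
proof -
  have "\<exists>G. (\<forall>x. G x = G (coord_proj S x)) \<and>
      (\<forall>x j. j \<in> S \<longrightarrow> G (x + ue j) = G x + \<omega> (coord_proj S x) j)" if "finite S" for S
    using that
  proof (induction S rule: finite_induct)
    case empty
    show ?case by (rule exI[of _ "\<lambda>x. 0"]) simp
  next
    case (insert k S)
    then show ?case using potential_add_extend[OF closed] by blast
  qed
  from this[of UNIV] show ?thesis by (auto simp: coord_proj_UNIV)
qed

lemma potential_mult_extend:
  fixes \<omega> :: "int^'m::finite \<Rightarrow> 'm \<Rightarrow> 'a::field"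
  assumes nz: "\<And>x i. \<omega> x i \<noteq> 0"
    and closed: "\<And>x i j. \<omega> x i * \<omega> (x + ue i) j = \<omega> x j * \<omega> (x + ue j) i"
    and k: "k \<notin> S"
    and G_nz: "\<And>x. G x \<noteq> 0"
    and G_proj: "\<And>x. G x = G (coord_proj S x)"
    and G_step: "\<And>x j. j \<in> S \<Longrightarrow> G (x + ue j) = G x * \<omega> (coord_proj S x) j"
  shows "\<exists>G'. (\<forall>x. G' x \<noteq> 0) \<and> (\<forall>x. G' x = G' (coord_proj (insert k S) x)) \<and>
    (\<forall>x j. j \<in> insert k S \<longrightarrow> G' (x + ue j) = G' x * \<omega> (coord_proj (insert k S) x) j)"
proof -
  have "\<forall>y. \<exists>T. T 0 = 1 \<and> (\<forall>n. T n \<noteq> 0) \<and> (\<forall>n. T (n + 1) = T n * \<omega> (y + axis k n) k)"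
    by (intro allI int_primitive_mult nz)
  then obtain T where T0: "\<And>y. T y 0 = 1" and T_nz: "\<And>y n. T y n \<noteq> 0"
    and T1: "\<And>y n. T y (n + 1) = T y n * \<omega> (y + axis k n) k"
    by metis
  have T_shift: "T (y + ue j) n = T y n * \<omega> (y + axis k n) j / \<omega> y j" for y j n
    by (rule line_primitive_shift_mult[OF nz closed T0 T1])
  define G' where "G' x = G x * T (coord_proj S x) (x $ k)" for x
  have "G' x \<noteq> 0" for x unfolding G'_def using G_nz T_nz by simp
  moreover have "G' x = G' (coord_proj (insert k S) x)" for x
    unfolding G'_def using G_proj[of x] G_proj[of "coord_proj (insert k S) x"]
    by (simp add: coord_proj_proj[of S "insert k S"] coord_proj_nth subset_insertI)
  moreover have "G' (x + ue j) = G' x * \<omega> (coord_proj (insert k S) x) j" if "j \<in> insert k S" for x j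
  proof (cases "j = k")
    case True
    have "G (x + ue k) = G x" using G_proj[of "x + ue k"] G_proj[of x] coord_proj_add_out[OF k] by simp
    then show ?thesis using True T1[of "coord_proj S x" "x $ k"]
      by (simp add: G'_def coord_proj_add_out[OF k] T1 coord_proj_insert[OF k] ue_nth algebra_simps)
  next
    case False
    then have j: "j \<in> S" and xk: "(x + ue j) $ k = x $ k" using that by (simp_all add: ue_nth)
    have "G' (x + ue j) = G (x + ue j) * T (coord_proj S x + ue j) (x $ k)"
      unfolding G'_def coord_proj_add_in[OF j] xk ..
    also have "\<dots> = G x * \<omega> (coord_proj S x) j
        * (T (coord_proj S x) (x $ k) * \<omega> (coord_proj S x + axis k (x $ k)) j / \<omega> (coord_proj S x) j)"
      unfolding G_step[OF j] T_shift ..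
    also have "\<dots> = G' x * \<omega> (coord_proj (insert k S) x) j"
      unfolding G'_def coord_proj_insert[OF k] using nz by (simp add: field_simps)
    finally show ?thesis .
  qed
  ultimately show ?thesis by blast
qed

lemma closed_form_primitive_mult:
  fixes \<omega> :: "int^'m::finite \<Rightarrow> 'm \<Rightarrow> 'a::field"
  assumes nz: "\<And>x i. \<omega> x i \<noteq> 0"
    and closed: "\<And>x i j. \<omega> x i * \<omega> (x + ue i) j = \<omega> x j * \<omega> (x + ue j) i"
  shows "\<exists>F. (\<forall>x. F x \<noteq> 0) \<and> (\<forall>x k. F (x + ue k) = F x * \<omega> x k)"
proof -
  have "\<exists>G. (\<forall>x. G x \<noteq> 0) \<and> (\<forall>x. G x = G (coord_proj S x)) \<and>
      (\<forall>x j. j \<in> S \<longrightarrow> G (x + ue j) = G x * \<omega> (coord_proj S x) j)" if "finite S" for S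
    using that
  proof (induction S rule: finite_induct)
    case empty
    show ?case by (rule exI[of _ "\<lambda>x. 1"]) simp
  next
    case (insert k S)
    then show ?case using potential_mult_extend[OF nz closed] by blast
  qed
  from this[of UNIV] show ?thesis by (auto simp: coord_proj_UNIV)
qed

section \<open>Affine geometry of a single quadrilateral\<close>

definition indep2 :: "real^'n \<Rightarrow> real^'n \<Rightarrow> bool" where
  "indep2 d1 d2 \<longleftrightarrow> (\<forall>\<alpha> \<beta>. \<alpha> *\<^sub>R d1 + \<beta> *\<^sub>R d2 = 0 \<longrightarrow> \<alpha> = 0 \<and> \<beta> = 0)"

lemma indep2_coord_eq:
  assumes "indep2 d1 d2"
  shows "a *\<^sub>R d1 + b *\<^sub>R d2 = a' *\<^sub>R d1 + b' *\<^sub>R d2 \<longleftrightarrow> a = a' \<and> b = b'"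
proof
  assume "a *\<^sub>R d1 + b *\<^sub>R d2 = a' *\<^sub>R d1 + b' *\<^sub>R d2"
  then have "(a - a') *\<^sub>R d1 + (b - b') *\<^sub>R d2 = 0" by (simp add: algebra_simps)
  then show "a = a' \<and> b = b'" using assms unfolding indep2_def by fastforce
qed simp

text \<open>This is the coordinate form of
  non-degeneracy used throughout.\<close>
definition diag_frame :: "real^'n \<Rightarrow> real^'n \<Rightarrow> real^'n \<Rightarrow> real^'n \<Rightarrow> real^'n \<Rightarrow> real \<Rightarrow> real \<Rightarrow> bool" where
  "diag_frame A B C D M r1 r2 \<longleftrightarrow> indep2 (A - M) (B - M) \<and>
     C - M = r1 *\<^sub>R (A - M) \<and> D - M = r2 *\<^sub>R (B - M) \<and>
     r1 \<noteq> 0 \<and> r1 \<noteq> 1 \<and> r2 \<noteq> 0 \<and> r2 \<noteq> 1"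

lemma diag_frameE:
  assumes "diag_frame A B C D M r1 r2"
  obtains d1 d2 where "indep2 d1 d2" "A = M + d1" "B = M + d2"
    "C = M + r1 *\<^sub>R d1" "D = M + r2 *\<^sub>R d2" "r1 \<noteq> 0" "r1 \<noteq> 1" "r2 \<noteq> 0" "r2 \<noteq> 1"
  using assms unfolding diag_frame_def by (metis add.commute diff_add_cancel)

lemma collinear_on_line:
  assumes "\<forall>x\<in>S. \<exists>t. x = M + t *\<^sub>R v"
  shows "collinear S"
  unfolding collinear_def
proof (intro exI[of _ v] ballI)
  fix x y assume "x \<in> S" "y \<in> S"
  then obtain tx ty where "x = M + tx *\<^sub>R v" "y = M + ty *\<^sub>R v" using assms by blast
  then show "\<exists>c. x - y = c *\<^sub>R v" by (intro exI[of _ "tx - ty"]) (simp add: algebra_simps)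
qed

lemma in_line_thr_if_ratio:
  fixes P Q M :: "real^'n"
  assumes "Q - M = r *\<^sub>R (P - M)" "r \<noteq> 1"
  shows "M \<in> line_thr P Q"
proof -
  have Q: "Q = M + r *\<^sub>R (P - M)" using assms(1) by (simp add: algebra_simps)
  have "(1 - r) *\<^sub>R M = (- r) *\<^sub>R P + Q" unfolding Q by (simp add: algebra_simps)
  then have "M = (1 / (1 - r)) *\<^sub>R ((- r) *\<^sub>R P + Q)" using assms(2)
    by (metis divide_self_if eq_iff_diff_eq_0 right_minus_eq scaleR_collapse scaleR_one scaleR_scaleR
        times_divide_eq_left divide_inverse_commute mult.commute)
  then have "M = (- r / (1 - r)) *\<^sub>R P + (1 / (1 - r)) *\<^sub>R Q" by (simp add: algebra_simps)
  moreover have "- r / (1 - r) + 1 / (1 - r) = 1" using assms(2) by (simp add: field_simps)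
  ultimately show ?thesis unfolding line_thr_def affine_hull_2 by blast
qed

lemma line_thr_param:
  fixes P Q M :: "real^'n"
  assumes "X \<in> line_thr P Q" "Q - M = r *\<^sub>R (P - M)"
  shows "\<exists>s. X = M + s *\<^sub>R (P - M)"
proof -
  obtain u v where X: "X = u *\<^sub>R P + v *\<^sub>R Q" "u + v = 1"
    using assms(1) unfolding line_thr_def affine_hull_2 by blast
  have Q: "Q = M + r *\<^sub>R (P - M)" using assms(2) by (simp add: algebra_simps)
  have "X = M + (u + v * r) *\<^sub>R (P - M)"
    unfolding X(1) Q using X(2)
    by (simp add: algebra_simps) (metis add.commute scaleR_add_left scaleR_one add.left_commute)
  then show ?thesis by blast
qed

lemma line_thr_ratio:
  fixes A C M :: "real^'n"
  assumes "M \<in> line_thr A C" "M \<noteq> A" "M \<noteq> C"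
  shows "\<exists>r. C - M = r *\<^sub>R (A - M) \<and> r \<noteq> 0 \<and> r \<noteq> 1"
proof -
  obtain u v where M: "M = u *\<^sub>R A + v *\<^sub>R C" "u + v = 1"
    using assms(1) unfolding line_thr_def affine_hull_2 by blast
  then have v: "v = 1 - u" by simp
  have u: "u \<noteq> 1" "u \<noteq> 0" using assms(2,3) M v by auto
  have AM: "A - M = (1 - u) *\<^sub>R (A - C)" unfolding M(1) v by (simp add: algebra_simps)
  have CM: "C - M = u *\<^sub>R (C - A)" unfolding M(1) v by (simp add: algebra_simps)
  have cc: "(- u / (1 - u)) * (1 - u) = - u" using u by (simp add: field_simps)
  have "(- u / (1 - u)) *\<^sub>R (A - M) = ((- u / (1 - u)) * (1 - u)) *\<^sub>R (A - C)" unfolding AM by simp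
  also have "\<dots> = C - M" unfolding cc CM by (simp add: algebra_simps)
  finally have "C - M = (- u / (1 - u)) *\<^sub>R (A - M)" ..
  moreover have "- u / (1 - u) \<noteq> 0" "- u / (1 - u) \<noteq> 1" using u by (simp_all add: field_simps)
  ultimately show ?thesis by blast
qed

lemma sratio_eq:
  fixes P Q M :: "real^'n"
  assumes "P - M = t *\<^sub>R (Q - M)" "Q \<noteq> M"
  shows "sratio M P Q = t"
  unfolding sratio_def
proof (rule the_equality)
  show "P - M = t *\<^sub>R (Q - M)" by (rule assms(1))
next
  fix t' assume "P - M = t' *\<^sub>R (Q - M)"
  then have "(t' - t) *\<^sub>R (Q - M) = 0" using assms(1) by (simp add: algebra_simps)
  then show "t' = t" using assms(2) by simp
qed

lemma nondeg_imp_diag_frame: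
  fixes A B C D :: "real^'n"
  assumes "nondeg_planar_quad A B C D"
  shows "\<exists>M r1 r2. diag_frame A B C D M r1 r2"
proof -
  obtain M where M1: "M \<in> line_thr A C" and M2: "M \<in> line_thr B D" and M: "M \<notin> {A, B, C, D}"
    using assms unfolding nondeg_planar_quad_def by blast
  obtain r1 where r1: "C - M = r1 *\<^sub>R (A - M)" "r1 \<noteq> 0" "r1 \<noteq> 1" using line_thr_ratio[OF M1] M by auto
  obtain r2 where r2: "D - M = r2 *\<^sub>R (B - M)" "r2 \<noteq> 0" "r2 \<noteq> 1" using line_thr_ratio[OF M2] M by auto
  have "indep2 (A - M) (B - M)"
    unfolding indep2_def
  proof (intro allI impI)
    fix \<alpha> \<beta> assume h: "\<alpha> *\<^sub>R (A - M) + \<beta> *\<^sub>R (B - M) = 0"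
    show "\<alpha> = 0 \<and> \<beta> = 0"
    proof (cases "\<alpha> = 0")
      case True
      then show ?thesis using h M by auto
    next
      case False
      \<comment> \<open>otherwise A, B and C would lie on the line through M in direction B - M\<close>
      define \<gamma> where "\<gamma> = - \<beta> / \<alpha>"
      have "\<alpha> *\<^sub>R (A - M) = (- \<beta>) *\<^sub>R (B - M)"
        using h by (simp add: algebra_simps eq_neg_iff_add_eq_0)
      then have "(1 / \<alpha>) *\<^sub>R (\<alpha> *\<^sub>R (A - M)) = (1 / \<alpha>) *\<^sub>R ((- \<beta>) *\<^sub>R (B - M))" by simp
      then have A: "A = M + \<gamma> *\<^sub>R (B - M)" using False by (simp add: \<gamma>_def algebra_simps)
      have "B = M + 1 *\<^sub>R (B - M)" "C = M + (r1 * \<gamma>) *\<^sub>R (B - M)"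
        using r1(1) A by (simp_all add: algebra_simps)
      then have "collinear {A, B, C}" using A by (intro collinear_on_line) blast
      then show ?thesis using assms unfolding nondeg_planar_quad_def by blast
    qed
  qed
  then show ?thesis unfolding diag_frame_def using r1 r2 by blast
qed

lemma diag_frame_diag_int:
  fixes A B C D :: "real^'n"
  assumes "diag_frame A B C D M r1 r2"
  shows "diag_int A B C D = M"
  unfolding diag_int_def
proof (rule the_equality)
  show "M \<in> line_thr A C \<and> M \<in> line_thr B D"
    using assms unfolding diag_frame_def by (auto intro: in_line_thr_if_ratio)
next
  fix X assume "X \<in> line_thr A C \<and> X \<in> line_thr B D"
  then obtain s t where X: "X = M + s *\<^sub>R (A - M)" "X = M + t *\<^sub>R (B - M)"
    using line_thr_param assms unfolding diag_frame_def by meson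
  then have "s *\<^sub>R (A - M) + (- t) *\<^sub>R (B - M) = 0" by (simp add: algebra_simps)
  then have "s = 0" using assms unfolding diag_frame_def indep2_def by blast
  then show "X = M" using X by simp
qed

lemma not_collinear_by_det:
  fixes P Q R :: "real^'n"
  assumes ind: "indep2 d1 d2" and P: "P = R + a1 *\<^sub>R d1 + b1 *\<^sub>R d2" and Q: "Q = R + a2 *\<^sub>R d1 + b2 *\<^sub>R d2"
    and det: "a1 * b2 - a2 * b1 \<noteq> 0"
  shows "\<not> collinear {P, Q, R}"
proof
  assume "collinear {P, Q, R}"
  then obtain v c1 c2 where c: "P - R = c1 *\<^sub>R v" "Q - R = c2 *\<^sub>R v" unfolding collinear_def by blast
  have "c2 *\<^sub>R (P - R) - c1 *\<^sub>R (Q - R) = 0" unfolding c by (simp add: algebra_simps)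
  then have "(c2 * a1 - c1 * a2) *\<^sub>R d1 + (c2 * b1 - c1 * b2) *\<^sub>R d2 = 0"
    unfolding P Q by (simp add: algebra_simps)
  then have "c2 * a1 - c1 * a2 = 0 \<and> c2 * b1 - c1 * b2 = 0" using ind unfolding indep2_def by blast
  then have e: "c2 * a1 = c1 * a2" "c2 * b1 = c1 * b2" by simp_all
  have "c1 * (a1 * b2 - a2 * b1) = a1 * (c2 * b1) - b1 * (c2 * a1)" using e by (simp add: algebra_simps)
  then have c1: "c1 * (a1 * b2 - a2 * b1) = 0" by (simp add: algebra_simps)
  have "c2 * (a1 * b2 - a2 * b1) = b2 * (c1 * a2) - a2 * (c1 * b2)" using e by (simp add: algebra_simps)
  then have c2: "c2 * (a1 * b2 - a2 * b1) = 0" by (simp add: algebra_simps)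
  from c1 c2 have "c1 = 0" "c2 = 0" using det by simp_all
  then have "a1 *\<^sub>R d1 + b1 *\<^sub>R d2 = 0" using c P by (simp add: algebra_simps)
  then show False using ind det unfolding indep2_def by force
qed

lemma diag_frame_nondeg:
  fixes A B C D :: "real^'n"
  assumes q: "diag_frame A B C D M r1 r2"
  shows "nondeg_planar_quad A B C D"
proof -
  obtain d1 d2 where ind: "indep2 d1 d2" and pts: "A = M + d1" "B = M + d2"
      "C = M + r1 *\<^sub>R d1" "D = M + r2 *\<^sub>R d2" and r: "r1 \<noteq> 0" "r1 \<noteq> 1" "r2 \<noteq> 0" "r2 \<noteq> 1"
    using diag_frameE[OF q] by metis
  define pt where "pt a b = M + a *\<^sub>R d1 + b *\<^sub>R d2" for a b
  have pt_eq: "pt a b = pt a' b' \<longleftrightarrow> a = a' \<and> b = b'" for a b a' b'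
    using indep2_coord_eq[OF ind, of a b a' b'] unfolding pt_def by (simp add: add.assoc)
  have cA: "A = pt 1 0" "B = pt 0 1" "C = pt r1 0" "D = pt 0 r2" "M = pt 0 0"
    unfolding pt_def pts by simp_all
  have "{A, B, C, D} \<subseteq> affine hull {M, A, B}"
  proof -
    have "C \<in> affine hull {M, A, B}" unfolding affine_hull_3 pts
      by (intro CollectI exI[of _ "1 - r1"] exI[of _ r1] exI[of _ 0]) (simp add: algebra_simps)
    moreover have "D \<in> affine hull {M, A, B}" unfolding affine_hull_3 pts
      by (intro CollectI exI[of _ "1 - r2"] exI[of _ 0] exI[of _ r2]) (simp add: algebra_simps)
    ultimately show ?thesis by (auto intro: hull_inc)
  qed
  then have "coplanar {A, B, C, D}" unfolding coplanar_def by blast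
  moreover have "distinct [A, B, C, D]" "M \<notin> {A, B, C, D}" using r unfolding cA by (simp_all add: pt_eq)
  moreover have "\<not> collinear {A, B, C}"
    by (rule not_collinear_by_det[OF ind, of A C "1 - r1" 0 B "-r1" 1]) (use pts r in \<open>auto simp: algebra_simps\<close>)
  moreover have "\<not> collinear {A, B, D}"
    by (rule not_collinear_by_det[OF ind, of A D 1 "-r2" B 0 "1 - r2"]) (use pts r in \<open>auto simp: algebra_simps\<close>)
  moreover have "\<not> collinear {A, C, D}"
    by (rule not_collinear_by_det[OF ind, of A D 1 "-r2" C r1 "-r2"]) (use pts r in \<open>auto simp: algebra_simps\<close>)
  moreover have "\<not> collinear {B, C, D}"
    by (rule not_collinear_by_det[OF ind, of B D 0 "1 - r2" C r1 "-r2"]) (use pts r in \<open>auto simp: algebra_simps\<close>)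
  moreover have "M \<in> line_thr A C" "M \<in> line_thr B D"
    using q unfolding diag_frame_def by (auto intro: in_line_thr_if_ratio)
  ultimately show ?thesis unfolding nondeg_planar_quad_def by blast
qed

section \<open>The one-form q of diagonal ratios\<close>

lemma sqM_swap: "sqM f u j i = sqM f u i j"
  unfolding sqM_def diag_int_def line_thr_def by (simp add: add_ac insert_commute conj_commute)

text \<open>q is well defined: its value on a diagonal may be computed from the unique
  elementary square containing that diagonal.\<close>
lemma qform_eq:
  fixes f :: "int^'m::finite \<Rightarrow> real^'n"
  assumes ij: "i \<noteq> j" and ab: "{a, b} = {u, u + ue i + ue j} \<or> {a, b} = {u + ue i, u + ue j}"
  shows "qform f a b = sratio (sqM f u i j) (f b) (f a)"
  unfolding qform_def
proof (rule the_equality)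
  show "\<exists>u' i' j'. i' \<noteq> j' \<and> ({a, b} = {u', u' + ue i' + ue j'} \<or> {a, b} = {u' + ue i', u' + ue j'}) \<and>
          sratio (sqM f u i j) (f b) (f a) = sratio (sqM f u' i' j') (f b) (f a)"
    using assms by blast
next
  fix x assume "\<exists>u' i' j'. i' \<noteq> j' \<and> ({a, b} = {u', u' + ue i' + ue j'} \<or> {a, b} = {u' + ue i', u' + ue j'}) \<and>
          x = sratio (sqM f u' i' j') (f b) (f a)"
  then obtain u' i' j' where i'j': "i' \<noteq> j'"
    and ab': "{a, b} = {u', u' + ue i' + ue j'} \<or> {a, b} = {u' + ue i', u' + ue j'}"
    and x: "x = sratio (sqM f u' i' j') (f b) (f a)" by blast
  have "u + u + ue i + ue j = u' + u' + ue i' + ue j'"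
    using diag_endpoints_sum[OF ab] diag_endpoints_sum[OF ab'] by simp
  then have "u' = u \<and> {i', j'} = {i, j}" using square_centre_unique ij i'j' by blast
  then have "sqM f u' i' j' = sqM f u i j" by (auto simp: doubleton_eq_iff sqM_swap)
  then show "x = sratio (sqM f u i j) (f b) (f a)" using x by simp
qed

definition diag_ratio1 :: "(int^'m::finite \<Rightarrow> real^'n) \<Rightarrow> int^'m \<Rightarrow> 'm \<Rightarrow> 'm \<Rightarrow> real" where
  "diag_ratio1 f u i j = sratio (sqM f u i j) (f (u + ue i + ue j)) (f u)"

definition diag_ratio2 :: "(int^'m::finite \<Rightarrow> real^'n) \<Rightarrow> int^'m \<Rightarrow> 'm \<Rightarrow> 'm \<Rightarrow> real" where
  "diag_ratio2 f u i j = sratio (sqM f u i j) (f (u + ue j)) (f (u + ue i))"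

lemma Qnet_square:
  fixes f :: "int^'m::finite \<Rightarrow> real^'n::finite"
  assumes "is_Qnet f" "i \<noteq> j"
  shows "diag_frame (f u) (f (u + ue i)) (f (u + ue i + ue j)) (f (u + ue j))
           (sqM f u i j) (diag_ratio1 f u i j) (diag_ratio2 f u i j)"
    and "qform f u (u + ue i + ue j) = diag_ratio1 f u i j"
    and "qform f (u + ue i + ue j) u = 1 / diag_ratio1 f u i j"
    and "qform f (u + ue i) (u + ue j) = diag_ratio2 f u i j"
    and "qform f (u + ue j) (u + ue i) = 1 / diag_ratio2 f u i j"
proof -
  let ?A = "f u" and ?B = "f (u + ue i)" and ?C = "f (u + ue i + ue j)" and ?D = "f (u + ue j)"
  have "nondeg_planar_quad ?A ?B ?C ?D" using assms unfolding is_Qnet_def by blast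
  then obtain M r1 r2 where fr: "diag_frame ?A ?B ?C ?D M r1 r2" using nondeg_imp_diag_frame by blast
  then obtain d1 d2 where pts: "?A = M + d1" "?B = M + d2" "?C = M + r1 *\<^sub>R d1" "?D = M + r2 *\<^sub>R d2"
      and ind: "indep2 d1 d2" and r: "r1 \<noteq> 0" "r2 \<noteq> 0"
    by (rule diag_frameE) blast
  have M: "sqM f u i j = M" unfolding sqM_def using diag_frame_diag_int[OF fr] .
  have d: "d1 \<noteq> 0" "d2 \<noteq> 0" using ind unfolding indep2_def by force+
  have R1: "diag_ratio1 f u i j = r1" "sratio M ?A ?C = 1 / r1"
    unfolding diag_ratio1_def M using d r by (simp_all add: pts sratio_eq)
  have R2: "diag_ratio2 f u i j = r2" "sratio M ?B ?D = 1 / r2"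
    unfolding diag_ratio2_def M using d r by (simp_all add: pts sratio_eq)
  show "diag_frame ?A ?B ?C ?D (sqM f u i j) (diag_ratio1 f u i j) (diag_ratio2 f u i j)"
    using fr M R1 R2 by simp
  show "qform f u (u + ue i + ue j) = diag_ratio1 f u i j"
    using qform_eq[OF assms(2), of u "u + ue i + ue j" u f] by (simp add: diag_ratio1_def)
  show "qform f (u + ue i + ue j) u = 1 / diag_ratio1 f u i j"
    using qform_eq[OF assms(2), of "u + ue i + ue j" u u f] R1 M by (simp add: insert_commute)
  show "qform f (u + ue i) (u + ue j) = diag_ratio2 f u i j"
    using qform_eq[OF assms(2), of "u + ue i" "u + ue j" u f] by (simp add: diag_ratio2_def)
  show "qform f (u + ue j) (u + ue i) = 1 / diag_ratio2 f u i j"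
    using qform_eq[OF assms(2), of "u + ue j" "u + ue i" u f] R2 M by (simp add: insert_commute)
qed

lemma diag_ratios_nonzero:
  fixes f :: "int^'m::finite \<Rightarrow> real^'n::finite"
  assumes "is_Qnet f" "i \<noteq> j"
  shows "diag_ratio1 f u i j \<noteq> 0" "diag_ratio2 f u i j \<noteq> 0"
  using Qnet_square(1)[OF assms, of u] unfolding diag_frame_def by blast+

lemma qform_reverse:
  fixes f :: "int^'m::finite \<Rightarrow> real^'n::finite"
  assumes "is_Qnet f" "diag_edge x y"
  shows "qform f x y \<noteq> 0" and "qform f y x * qform f x y = 1"
proof -
  have "qform f x y \<noteq> 0 \<and> qform f y x * qform f x y = 1"
    using assms(2)
  proof (cases rule: diag_edgeE)
    case (1 u i j)
    then show ?thesis using Qnet_square(2-5)[OF assms(1) 1(1), of u] diag_ratios_nonzero[OF assms(1) 1(1), of u] by auto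
  next
    case (2 u i j)
    then show ?thesis using Qnet_square(2-5)[OF assms(1) 2(1), of u] diag_ratios_nonzero[OF assms(1) 2(1), of u] by auto
  next
    case (3 u i j)
    then show ?thesis using Qnet_square(2-5)[OF assms(1) 3(1), of u] diag_ratios_nonzero[OF assms(1) 3(1), of u] by auto
  next
    case (4 u i j)
    then show ?thesis using Qnet_square(2-5)[OF assms(1) 4(1), of u] diag_ratios_nonzero[OF assms(1) 4(1), of u] by auto
  qed
  then show "qform f x y \<noteq> 0" and "qform f y x * qform f x y = 1" by auto
qed

lemma Qnet_square_coords:
  fixes f :: "int^'m::finite \<Rightarrow> real^'n::finite"
  assumes "is_Qnet f" "i \<noteq> j"
  obtains M d1 d2 where "indep2 d1 d2" "f u = M + d1" "f (u + ue i) = M + d2"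
    "f (u + ue i + ue j) = M + diag_ratio1 f u i j *\<^sub>R d1" "f (u + ue j) = M + diag_ratio2 f u i j *\<^sub>R d2"
    "diag_ratio1 f u i j \<noteq> 1" "diag_ratio2 f u i j \<noteq> 1"
  using diag_frameE[OF Qnet_square(1)[OF assms, of u]] by blast

section \<open>Exactness of q and closedness along walks\<close>

definition q_exact :: "(int^'m::finite \<Rightarrow> real^'n) \<Rightarrow> (int^'m \<Rightarrow> real) \<Rightarrow> bool" where
  "q_exact f Q \<longleftrightarrow> (\<forall>x. Q x \<noteq> 0) \<and> (\<forall>x y. diag_edge x y \<longrightarrow> qform f x y = Q x / Q y)"

lemma q_exact_iff_ratios:
  fixes f :: "int^'m::finite \<Rightarrow> real^'n::finite"
  assumes Qf: "is_Qnet f"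
  shows "q_exact f Q \<longleftrightarrow> (\<forall>x. Q x \<noteq> 0) \<and> (\<forall>u i j. i \<noteq> j \<longrightarrow>
     diag_ratio1 f u i j = Q u / Q (u + ue i + ue j) \<and> diag_ratio2 f u i j = Q (u + ue i) / Q (u + ue j))"
    (is "_ \<longleftrightarrow> ?nz \<and> ?ratios")
proof
  assume "q_exact f Q"
  then have nz: "?nz" and E: "\<And>x y. diag_edge x y \<Longrightarrow> qform f x y = Q x / Q y"
    unfolding q_exact_def by blast+
  have "diag_ratio1 f u i j = Q u / Q (u + ue i + ue j)" if "i \<noteq> j" for u i j
    using Qnet_square(2)[OF Qf that] E[OF diag_edge_main[OF that]] by simp
  moreover have "diag_ratio2 f u i j = Q (u + ue i) / Q (u + ue j)" if "i \<noteq> j" for u i j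
    using Qnet_square(4)[OF Qf that] E[OF diag_edge_cross[OF that]] by simp
  ultimately show "?nz \<and> ?ratios" using nz by blast
next
  assume "?nz \<and> ?ratios"
  then have nz: "?nz" and ratios: "\<And>u i j. i \<noteq> j \<Longrightarrow> diag_ratio1 f u i j = Q u / Q (u + ue i + ue j)
      \<and> diag_ratio2 f u i j = Q (u + ue i) / Q (u + ue j)" by blast+
  have "qform f x y = Q x / Q y" if "diag_edge x y" for x y
    using that
  proof (cases rule: diag_edgeE)
    case (1 u i j)
    then show ?thesis using Qnet_square(2)[OF Qf 1(1)] ratios[OF 1(1)] by simp
  next
    case (2 u i j)
    then show ?thesis using Qnet_square(3)[OF Qf 2(1)] ratios[OF 2(1)] by simp
  next
    case (3 u i j)
    then show ?thesis using Qnet_square(4)[OF Qf 3(1)] ratios[OF 3(1)] by simp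
  next
    case (4 u i j)
    then show ?thesis using Qnet_square(5)[OF Qf 4(1)] ratios[OF 4(1)] by simp
  qed
  with nz show "q_exact f Q" unfolding q_exact_def by blast
qed

fun walk_prod :: "('a \<Rightarrow> 'a \<Rightarrow> real) \<Rightarrow> 'a list \<Rightarrow> real" where
  "walk_prod g (a # b # r) = g a b * walk_prod g (b # r)"
| "walk_prod g _ = 1"

lemma walk_prod_eq_prod_list: "prod_list (map (\<lambda>(a, b). g a b) (zip vs (tl vs))) = walk_prod g vs"
  by (induction vs rule: induct_list012) auto

lemma closed_on_iff_walk_prod:
  "closed_on col f \<longleftrightarrow> (\<forall>vs. vs \<noteq> [] \<longrightarrow> hd vs = last vs \<longrightarrow> (\<forall>v\<in>set vs. col v) \<longrightarrow>
     successively diag_edge vs \<longrightarrow> walk_prod (qform f) vs = 1)"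
  unfolding closed_on_def successively_conv_nth walk_prod_eq_prod_list ..

lemma walk_prod_snoc: "xs \<noteq> [] \<Longrightarrow> walk_prod g (xs @ [y]) = walk_prod g xs * g (last xs) y"
  by (induction g xs rule: walk_prod.induct) auto

lemma walk_prod_append:
  "xs \<noteq> [] \<Longrightarrow> ys \<noteq> [] \<Longrightarrow> walk_prod g (xs @ ys) = walk_prod g xs * g (last xs) (hd ys) * walk_prod g ys"
proof (induction xs rule: induct_list012)
  case (2 a)
  then obtain c r where "ys = c # r" by (cases ys) auto
  then show ?case by simp
qed (simp_all add: mult.assoc)

lemma walk_prod_coboundary:
  assumes "successively E vs" "vs \<noteq> []" "\<And>a b. E a b \<Longrightarrow> g a b = Q a / Q b" "\<And>x. Q x \<noteq> (0::real)"
  shows "walk_prod g vs = Q (hd vs) / Q (last vs)"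
  using assms(1,2)
proof (induction vs rule: induct_list012)
  case (3 x y xs)
  then show ?case using assms(3,4) by simp
qed (use assms(4) in auto)

lemma walk_prod_nonzero:
  assumes "successively E vs" "\<And>x y. E x y \<Longrightarrow> g x y \<noteq> 0"
  shows "walk_prod g vs \<noteq> 0"
  using assms(1) by (induction vs rule: induct_list012) (use assms(2) in auto)

lemma walk_prod_rev:
  assumes "successively E vs" "\<And>x y. E x y \<Longrightarrow> g y x * g x y = 1"
  shows "walk_prod g (rev vs) * walk_prod g vs = 1"
  using assms(1)
proof (induction vs rule: induct_list012)
  case (3 a b r)
  have s: "successively E (b # r)" "E a b" using 3(3) by simp_all
  have "walk_prod g (rev (a # b # r)) = walk_prod g (rev (b # r)) * g b a"
    using walk_prod_snoc[of "rev (b # r)" g a] by (simp add: last_rev)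
  then have "walk_prod g (rev (a # b # r)) * walk_prod g (a # b # r)
      = (walk_prod g (rev (b # r)) * walk_prod g (b # r)) * (g b a * g a b)"
    by (simp add: algebra_simps)
  also have "\<dots> = 1" using 3(2)[OF s(1)] assms(2)[OF s(2)] by simp
  finally show ?case .
qed simp_all

lemma walk_stays_in:
  assumes "successively E vs" "\<And>x y. E x y \<Longrightarrow> V x \<Longrightarrow> V y" "V (hd vs)"
  shows "\<forall>v\<in>set vs. V v"
  using assms(1,3) by (induction vs rule: induct_list012) (use assms(2) in auto)

lemma closed_walk_step:
  assumes sym: "\<And>x y. E x y \<Longrightarrow> E y x"
    and inv: "\<And>x y. E x y \<Longrightarrow> g y x * g x y = 1"
    and V_closed: "\<And>x y. E x y \<Longrightarrow> V x \<Longrightarrow> V y"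
    and closed: "\<And>vs. vs \<noteq> [] \<Longrightarrow> hd vs = last vs \<Longrightarrow> (\<forall>v\<in>set vs. V v) \<Longrightarrow> successively E vs \<Longrightarrow> walk_prod g vs = 1"
    and wx: "wx \<noteq> []" "hd wx = b" "last wx = p" "successively E wx"
    and wy: "wy \<noteq> []" "hd wy = b" "last wy = q" "successively E wy"
    and "V b" "E p q"
  shows "walk_prod g wx * g p q = walk_prod g wy"
proof -
  define vs where "vs = wx @ rev wy"
  have "successively E (rev wy)"
    using successively_mono[OF wy(4), of "\<lambda>a b. E b a"] sym by simp
  then have walk: "successively E vs" unfolding vs_def successively_append_iff
    using wx wy \<open>E p q\<close> by (simp add: hd_rev)
  have "hd vs = last vs" "vs \<noteq> []" unfolding vs_def using wx wy by (simp_all add: hd_rev last_rev)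
  moreover have "\<forall>v\<in>set vs. V v" using walk_stays_in[OF walk V_closed] wx \<open>V b\<close> unfolding vs_def by simp
  ultimately have "walk_prod g vs = 1" using closed walk by blast
  then have loop: "walk_prod g wx * g p q * walk_prod g (rev wy) = 1"
    using wx wy unfolding vs_def by (simp add: walk_prod_append hd_rev)
  have return: "walk_prod g (rev wy) * walk_prod g wy = 1" using walk_prod_rev[of E wy g] wy(4) inv by blast
  have "walk_prod g wx * g p q = walk_prod g wx * g p q * (walk_prod g (rev wy) * walk_prod g wy)"
    using return by simp
  also have "\<dots> = (walk_prod g wx * g p q * walk_prod g (rev wy)) * walk_prod g wy"
    by (simp only: mult.assoc)
  also have "\<dots> = walk_prod g wy" using loop by simp
  finally show ?thesis .
qed

lemma closed_form_potential_on_component: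
  fixes E :: "'a \<Rightarrow> 'a \<Rightarrow> bool" and g :: "'a \<Rightarrow> 'a \<Rightarrow> real"
  assumes sym: "\<And>x y. E x y \<Longrightarrow> E y x"
    and nz: "\<And>x y. E x y \<Longrightarrow> g x y \<noteq> 0"
    and inv: "\<And>x y. E x y \<Longrightarrow> g y x * g x y = 1"
    and V_closed: "\<And>x y. E x y \<Longrightarrow> V x \<Longrightarrow> V y"
    and "V b"
    and conn: "\<And>x. V x \<Longrightarrow> \<exists>vs. vs \<noteq> [] \<and> hd vs = b \<and> last vs = x \<and> successively E vs"
    and closed: "\<And>vs. vs \<noteq> [] \<Longrightarrow> hd vs = last vs \<Longrightarrow> (\<forall>v\<in>set vs. V v) \<Longrightarrow> successively E vs \<Longrightarrow> walk_prod g vs = 1"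
  shows "\<exists>P. (\<forall>x. P x \<noteq> 0) \<and> (\<forall>x y. V x \<longrightarrow> E x y \<longrightarrow> g x y = P x / P y)"
proof -
  define W where "W x = (SOME vs. vs \<noteq> [] \<and> hd vs = b \<and> last vs = x \<and> successively E vs)" for x
  have W: "W x \<noteq> [] \<and> hd (W x) = b \<and> last (W x) = x \<and> successively E (W x)" if "V x" for x
    unfolding W_def using someI_ex[OF conn[OF that]] .
  have W_nz: "walk_prod g (W x) \<noteq> 0" if "V x" for x using walk_prod_nonzero W[OF that] nz by blast
  define P where "P x = (if V x then 1 / walk_prod g (W x) else 1)" for x
  have "g x y = P x / P y" if "V x" "E x y" for x y
  proof -
    have "V y" using V_closed that by blast
    have "walk_prod g (W x) * g x y = walk_prod g (W y)"
    proof (rule closed_walk_step[where E = E and V = V])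
      show "E a c \<Longrightarrow> E c a" "E a c \<Longrightarrow> g c a * g a c = 1" "E a c \<Longrightarrow> V a \<Longrightarrow> V c" for a c
        using sym inv V_closed by blast+
    qed (use W[OF \<open>V x\<close>] W[OF \<open>V y\<close>] closed \<open>V b\<close> \<open>E x y\<close> in auto)
    then show ?thesis unfolding P_def using that \<open>V y\<close> W_nz by (simp add: field_simps)
  qed
  moreover have "P x \<noteq> 0" for x unfolding P_def using W_nz by simp
  ultimately show ?thesis by blast
qed

section \<open>Connectivity of the black and white graphs\<close>

lemma black_diff: "black (x - y) \<longleftrightarrow> (black x \<longleftrightarrow> black y)"
  by (simp add: black_iff coord_sum_diff)

lemma diag_edge_step:
  fixes y :: "int^'m::finite"
  assumes ij: "i \<noteq> j" and "s = 1 \<or> s = -1" "t = 1 \<or> t = -1"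
  shows "diag_edge y (y + axis i s + axis j t)"
proof -
  have neg: "axis k (-1::int) = - ue k" and pos: "axis k (1::int) = ue k" for k
    by (simp_all add: vec_eq_iff axis_def ue_nth)
  show ?thesis
    using assms(2,3)
  proof (elim disjE)
    assume "s = 1" "t = 1"
    then show ?thesis using diag_edge_main[OF ij, of y] by (simp add: pos)
  next
    assume "s = 1" "t = -1"
    then show ?thesis using diag_edge_cross[OF ij[symmetric], of "y - ue j"] by (simp add: pos neg algebra_simps)
  next
    assume "s = -1" "t = 1"
    then show ?thesis using diag_edge_cross[OF ij, of "y - ue i"] by (simp add: pos neg algebra_simps)
  next
    assume "s = -1" "t = -1"
    then show ?thesis using diag_edge_sym[OF diag_edge_main[OF ij, of "y - ue i - ue j"]] by (simp add: neg)
  qed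
qed

definition l1_norm :: "int^'m::finite \<Rightarrow> int" where
  "l1_norm x = (\<Sum>k\<in>UNIV. \<bar>x $ k\<bar>)"

lemma l1_norm_step_to_zero:
  assumes "x $ i \<noteq> 0"
  shows "l1_norm (x - axis i (sgn (x $ i))) = l1_norm x - 1"
proof -
  have "\<bar>(x - axis i (sgn (x $ i))) $ k\<bar> = \<bar>x $ k\<bar> - (if k = i then 1 else 0)" for k
    using assms by (auto simp: axis_def sgn_if abs_if)
  then show ?thesis unfolding l1_norm_def by (simp add: sum_subtractf)
qed

text \<open>Every black point x \<noteq> 0 is joined by a short diagonal walk to a black
  point of smaller l1 norm: move towards 0 in two nonzero coordinates, or twice
  in the only nonzero one (using a detour through a second direction).\<close>
lemma black_step_to_zero:
  fixes x :: "int^'m::finite"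
  assumes m2: "CARD('m) \<ge> 2" and black: "black x" and "x \<noteq> 0"
  shows "\<exists>ys. ys \<noteq> [] \<and> last ys = x \<and> successively diag_edge ys \<and> black (hd ys) \<and> l1_norm (hd ys) < l1_norm x"
proof -
  obtain i where xi: "x $ i \<noteq> 0" using \<open>x \<noteq> 0\<close> by (auto simp: vec_eq_iff)
  define s where "s = sgn (x $ i)"
  define x' where "x' = x - axis i s"
  have s: "s = 1 \<or> s = -1" using xi by (simp add: s_def sgn_if)
  have l1_x': "l1_norm x' = l1_norm x - 1" unfolding x'_def s_def by (rule l1_norm_step_to_zero[OF xi])
  show ?thesis
  proof (cases "\<exists>j. j \<noteq> i \<and> x $ j \<noteq> 0")
    case True
    then obtain j where j: "j \<noteq> i" "x $ j \<noteq> 0" by blast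
    define t where "t = sgn (x $ j)"
    have t: "t = 1 \<or> t = -1" using j by (simp add: t_def sgn_if)
    have x'j: "x' $ j = x $ j" using j(1) by (simp add: x'_def axis_def)
    define y where "y = x' - axis j t"
    have "l1_norm y = l1_norm x - 2"
      using l1_norm_step_to_zero[of x' j] j(2) l1_x' unfolding y_def t_def x'j by simp
    moreover have "black y" using black s t
      by (auto simp: y_def x'_def black_iff coord_sum_diff coord_sum_axis)
    moreover have "diag_edge y x" using diag_edge_step[OF j(1)[symmetric] s t, of y]
      by (simp add: y_def x'_def)
    ultimately show ?thesis by (intro exI[of _ "[y, x]"]) simp
  next
    case False
    then have only_i: "\<And>k. k \<noteq> i \<Longrightarrow> x $ k = 0" by blast
    have "coord_sum x = x $ i" unfolding coord_sum_def using only_i by (subst sum.remove[of _ i]) auto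
    then have "even (x $ i)" using black by (simp add: black_iff)
    then have x'i: "x' $ i \<noteq> 0" "sgn (x' $ i) = s" using xi s
      by (auto simp: x'_def s_def axis_def sgn_if)
    obtain j where j: "j \<noteq> i" using exists_other_direction[OF m2] by blast
    define y where "y = x' - axis i s"
    define z where "z = y + axis i s + axis j 1"
    have "l1_norm y = l1_norm x - 2"
      using l1_norm_step_to_zero[OF x'i(1)] l1_x' unfolding y_def x'i(2) by simp
    moreover have "black y" using black s
      unfolding y_def x'_def black_iff coord_sum_diff coord_sum_axis by auto
    moreover have "diag_edge y z" unfolding z_def by (rule diag_edge_step[OF j[symmetric] s]) simp
    moreover have "diag_edge z x"
    proof -
      have "z + axis i s + axis j (-1) = x" by (simp add: z_def y_def x'_def vec_eq_iff axis_def)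
      then show ?thesis using diag_edge_step[OF j[symmetric] s, of "-1" z] by simp
    qed
    ultimately show ?thesis by (intro exI[of _ "[y, z, x]"]) simp
  qed
qed

lemma black_connected:
  fixes x :: "int^'m::finite"
  assumes m2: "CARD('m) \<ge> 2"
  shows "black x \<Longrightarrow> \<exists>vs. vs \<noteq> [] \<and> hd vs = 0 \<and> last vs = x \<and> successively diag_edge vs"
proof (induction x rule: measure_induct_rule[where f = "\<lambda>x. nat (l1_norm x)"])
  case (less x)
  show ?case
  proof (cases "x = 0")
    case False
    then obtain ys where ys: "ys \<noteq> []" "last ys = x" "successively diag_edge ys"
        "black (hd ys)" "l1_norm (hd ys) < l1_norm x"
      using black_step_to_zero[OF m2 less.prems] by blast
    moreover have "l1_norm (hd ys) \<ge> 0" unfolding l1_norm_def by (simp add: sum_nonneg)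
    ultimately obtain vs where vs: "vs \<noteq> []" "hd vs = 0" "last vs = hd ys" "successively diag_edge vs"
      using less.IH[of "hd ys"] by auto
    obtain r where r: "ys = hd ys # r" using ys(1) by (cases ys) auto
    have "successively diag_edge (vs @ r)" "last (vs @ r) = x"
      using vs ys r by (metis successively_Cons successively_append_iff last_ConsL last_ConsR last_appendR
          append_Nil2 list.sel(1))+
    then show ?thesis using vs by (intro exI[of _ "vs @ r"]) simp
  qed (intro exI[of _ "[0]"], simp)
qed

lemma same_colour_connected:
  fixes x b :: "int^'m::finite"
  assumes m2: "CARD('m) \<ge> 2" and "black (x - b)"
  shows "\<exists>vs. vs \<noteq> [] \<and> hd vs = b \<and> last vs = x \<and> successively diag_edge vs"
proof -
  obtain vs where vs: "vs \<noteq> []" "hd vs = 0" "last vs = x - b" "successively diag_edge vs"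
    using black_connected[OF m2 assms(2)] by blast
  have "successively diag_edge (map (\<lambda>v. v + b) vs)"
    unfolding successively_map by (rule successively_mono[OF vs(4)]) (rule diag_edge_shift)
  then show ?thesis using vs by (intro exI[of _ "map (\<lambda>v. v + b) vs"]) (simp add: hd_map last_map)
qed

section \<open>Closedness versus exactness of q\<close>

lemma exact_imp_closed:
  fixes f :: "int^'m::finite \<Rightarrow> real^'n"
  assumes "q_exact f Q"
  shows "closed_on col f"
  unfolding closed_on_iff_walk_prod
proof (intro allI impI)
  fix vs :: "(int^'m) list"
  assume "vs \<noteq> []" "hd vs = last vs" "successively diag_edge vs"
  moreover have "\<And>a b. diag_edge a b \<Longrightarrow> qform f a b = Q a / Q b" "\<And>x. Q x \<noteq> 0"
    using assms unfolding q_exact_def by blast+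
  ultimately show "walk_prod (qform f) vs = 1" using walk_prod_coboundary[of diag_edge vs] by simp
qed

lemma closed_colour_potential:
  fixes f :: "int^'m::finite \<Rightarrow> real^'n::finite"
  assumes m2: "CARD('m) \<ge> 2" and Qf: "is_Qnet f" and closed: "closed_on col f"
    and col: "\<And>x. col x \<longleftrightarrow> black (x - b)"
  shows "\<exists>P. (\<forall>x. P x \<noteq> 0) \<and> (\<forall>x y. col x \<longrightarrow> diag_edge x y \<longrightarrow> qform f x y = P x / P y)"
proof (rule closed_form_potential_on_component)
  show "col b" by (simp add: col black_iff coord_sum_def)
  show "col y" if "diag_edge x y" "col x" for x y
    using that diag_edge_black[OF that(1)] by (simp add: col black_diff)
qed (use diag_edge_sym qform_reverse[OF Qf] same_colour_connected[OF m2] col closed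
       in \<open>auto simp: closed_on_iff_walk_prod\<close>)

lemma closed_imp_exact:
  fixes f :: "int^'m::finite \<Rightarrow> real^'n::finite"
  assumes m2: "CARD('m) \<ge> 2" and Qf: "is_Qnet f"
    and black: "closed_on black f" and white: "closed_on white f"
  shows "\<exists>Q. q_exact f Q"
proof -
  obtain Pb where Pb: "\<forall>x. Pb x \<noteq> 0" "\<forall>x y. black x \<longrightarrow> diag_edge x y \<longrightarrow> qform f x y = Pb x / Pb y"
    using closed_colour_potential[OF m2 Qf black, of 0] by auto
  \<comment> \<open>any unit vector e_k is a white base point\<close>
  obtain k :: 'm where True by blast
  have "white x \<longleftrightarrow> black (x - ue k)" for x
    by (simp add: white_iff_not_black black_diff black_iff coord_sum_diff coord_sum_ue)
  then obtain Pw where Pw: "\<forall>x. Pw x \<noteq> 0" "\<forall>x y. white x \<longrightarrow> diag_edge x y \<longrightarrow> qform f x y = Pw x / Pw y"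
    using closed_colour_potential[OF m2 Qf white] by blast
  define Q where "Q x = (if black x then Pb x else Pw x)" for x
  have "qform f x y = Q x / Q y" if "diag_edge x y" for x y
    using Pb Pw diag_edge_black[OF that] that unfolding Q_def white_iff_not_black by auto
  then have "q_exact f Q" unfolding q_exact_def Q_def using Pb Pw by auto
  then show ?thesis by blast
qed

section \<open>Koenigs nets have exact q\<close>

text \<open>Parallel edges of a dual net: f*(x + e_k) - f*(x) = lambda x k (f(x + e_k) - f(x))
  with nonzero lambda (the dual net is itself non-degenerate).\<close>
lemma dual_edge_scaling:
  fixes f fs :: "int^'m::finite \<Rightarrow> real^'n::finite"
  assumes m2: "CARD('m) \<ge> 2" and Qfs: "is_Qnet fs"
    and dual: "\<And>u i j. i \<noteq> j \<Longrightarrow>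
        dual_quad (f u) (f (u + ue i)) (f (u + ue i + ue j)) (f (u + ue j))
                  (fs u) (fs (u + ue i)) (fs (u + ue i + ue j)) (fs (u + ue j))"
  shows "\<exists>lam. (\<forall>x k. lam x k \<noteq> 0) \<and> (\<forall>x k. fs (x + ue k) - fs x = lam x k *\<^sub>R (f (x + ue k) - f x))"
proof -
  have "\<forall>x k. \<exists>c. fs (x + ue k) - fs x = c *\<^sub>R (f (x + ue k) - f x)"
  proof (intro allI)
    fix x :: "int^'m" and k :: 'm
    obtain j where "j \<noteq> k" using exists_other_direction[OF m2] by blast
    then show "\<exists>c. fs (x + ue k) - fs x = c *\<^sub>R (f (x + ue k) - f x)"
      using dual[of k j x] unfolding dual_quad_def par_def by blast
  qed
  then obtain lam where lam: "\<And>x k. fs (x + ue k) - fs x = lam x k *\<^sub>R (f (x + ue k) - f x)" by metis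
  have "lam x k \<noteq> 0" for x k
  proof
    assume "lam x k = 0"
    then have "fs (x + ue k) = fs x" using lam[of x k] by simp
    moreover obtain j where "k \<noteq> j" using exists_other_direction[OF m2] by metis
    then have "distinct [fs x, fs (x + ue k), fs (x + ue k + ue j), fs (x + ue j)]"
      using Qfs unfolding is_Qnet_def nondeg_planar_quad_def by blast
    ultimately show False by simp
  qed
  then show ?thesis using lam by blast
qed

text \<open>In a square with dual square, the edge scalings lambda determine the diagonal
  ratios: parallelism of the dual diagonals to the opposite diagonals gives
  r1 lambda(u + e_i, j) = lambda(u, i), r1 lambda(u + e_j, i) = lambda(u, j)
  and r2 lambda(u, j) = lambda(u, i).\<close>
lemma dual_square_relations:
  fixes f fs :: "int^'m::finite \<Rightarrow> real^'n::finite" and lam :: "int^'m \<Rightarrow> 'm \<Rightarrow> real"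
  assumes Qf: "is_Qnet f" and ij: "i \<noteq> j"
    and lam: "\<And>x k. fs (x + ue k) - fs x = lam x k *\<^sub>R (f (x + ue k) - f x)"
    and dual: "dual_quad (f u) (f (u + ue i)) (f (u + ue i + ue j)) (f (u + ue j))
                  (fs u) (fs (u + ue i)) (fs (u + ue i + ue j)) (fs (u + ue j))"
  shows "diag_ratio1 f u i j * lam (u + ue i) j = lam u i"
    and "diag_ratio1 f u i j * lam (u + ue j) i = lam u j"
    and "diag_ratio2 f u i j * lam u j = lam u i"
proof -
  let ?r1 = "diag_ratio1 f u i j" and ?r2 = "diag_ratio2 f u i j"
  obtain M d1 d2 where ind: "indep2 d1 d2" and A: "f u = M + d1" and B: "f (u + ue i) = M + d2"
      and C: "f (u + ue i + ue j) = M + ?r1 *\<^sub>R d1" and D: "f (u + ue j) = M + ?r2 *\<^sub>R d2"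
    by (rule Qnet_square_coords[OF Qf ij])
  have C': "f (u + ue j + ue i) = M + ?r1 *\<^sub>R d1" using C by (simp add: add_ac)
  define l1 l2 m1 m2 where "l1 = lam u i" "l2 = lam u j" "m1 = lam (u + ue j) i" "m2 = lam (u + ue i) j"
  have "fs (u + ue i + ue j) - fs u = (fs (u + ue i + ue j) - fs (u + ue i)) + (fs (u + ue i) - fs u)"
    by simp
  also have "\<dots> = (m2 * ?r1 - l1) *\<^sub>R d1 + (l1 - m2) *\<^sub>R d2"
    using lam[of "u + ue i" j] lam[of u i] unfolding l1_l2_m1_m2_def A B C by (simp add: algebra_simps)
  finally have CA1: "fs (u + ue i + ue j) - fs u = (m2 * ?r1 - l1) *\<^sub>R d1 + (l1 - m2) *\<^sub>R d2" .
  have "fs (u + ue i + ue j) - fs u = (fs (u + ue j + ue i) - fs (u + ue j)) + (fs (u + ue j) - fs u)"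
    by (simp add: add_ac)
  also have "\<dots> = (m1 * ?r1 - l2) *\<^sub>R d1 + ((l2 - m1) * ?r2) *\<^sub>R d2"
    using lam[of "u + ue j" i] lam[of u j] unfolding l1_l2_m1_m2_def A D C' by (simp add: algebra_simps)
  finally have CA2: "fs (u + ue i + ue j) - fs u = (m1 * ?r1 - l2) *\<^sub>R d1 + ((l2 - m1) * ?r2) *\<^sub>R d2" .
  have DB: "fs (u + ue j) - fs (u + ue i) = (l1 - l2) *\<^sub>R d1 + (l2 * ?r2 - l1) *\<^sub>R d2"
    using lam[of u j] lam[of u i] unfolding l1_l2_m1_m2_def A B D
    by (simp add: algebra_simps)
  \<comment> \<open>the dual diagonals are parallel to D - B = (r2 - 1) d2 and C - A = (r1 - 1) d1\<close>
  obtain c c' where c: "fs (u + ue i + ue j) - fs u = (c * (?r2 - 1)) *\<^sub>R d2"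
      and c': "fs (u + ue j) - fs (u + ue i) = (c' * (?r1 - 1)) *\<^sub>R d1"
    using dual unfolding dual_quad_def par_def A B C D by (auto simp: algebra_simps)
  have "(m2 * ?r1 - l1) *\<^sub>R d1 + (l1 - m2) *\<^sub>R d2 = 0 *\<^sub>R d1 + (c * (?r2 - 1)) *\<^sub>R d2"
    using CA1 c by simp
  then have e1: "m2 * ?r1 - l1 = 0" using indep2_coord_eq[OF ind] by blast
  have e2: "m1 * ?r1 - l2 = m2 * ?r1 - l1" using CA1 CA2 indep2_coord_eq[OF ind] by metis
  have "(l1 - l2) *\<^sub>R d1 + (l2 * ?r2 - l1) *\<^sub>R d2 = (c' * (?r1 - 1)) *\<^sub>R d1 + 0 *\<^sub>R d2"
    using DB c' by simp
  then have e3: "l2 * ?r2 - l1 = 0" using indep2_coord_eq[OF ind] by blast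
  show "?r1 * lam (u + ue i) j = lam u i" using e1 unfolding l1_l2_m1_m2_def by (simp add: mult.commute)
  show "?r1 * lam (u + ue j) i = lam u j" using e1 e2 unfolding l1_l2_m1_m2_def by (simp add: mult.commute)
  show "?r2 * lam u j = lam u i" using e3 unfolding l1_l2_m1_m2_def by (simp add: mult.commute)
qed

text \<open>A nowhere vanishing edge function lam with
  lam(x, i) lam(x + e_j, i) = lam(x, j) lam(x + e_i, j) is a checkerboard product
  lam(x, k) = Q(x) Q(x + e_k): invert lam at black points to get a closed
  multiplicative form, integrate it, and invert the primitive back at white points.\<close>
lemma checkerboard_factorization:
  fixes lam :: "int^'m::finite \<Rightarrow> 'm \<Rightarrow> 'a::field"
  assumes nz: "\<And>x k. lam x k \<noteq> 0"
    and rel: "\<And>x i j. lam x i * lam (x + ue j) i = lam x j * lam (x + ue i) j"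
  shows "\<exists>Q. (\<forall>x. Q x \<noteq> 0) \<and> (\<forall>x k. Q x * Q (x + ue k) = lam x k)"
proof -
  define \<Omega> where "\<Omega> x k = (if black x then inverse (lam x k) else lam x k)" for x k
  have "\<Omega> x i * \<Omega> (x + ue i) j = \<Omega> x j * \<Omega> (x + ue j) i" for x i j
    using rel[of x i j] nz unfolding \<Omega>_def black_add_ue by (simp add: field_simps)
  moreover have "\<Omega> x k \<noteq> 0" for x k unfolding \<Omega>_def using nz by simp
  ultimately obtain P where P_nz: "\<And>x. P x \<noteq> 0" and P: "\<And>x k. P (x + ue k) = P x * \<Omega> x k"
    using closed_form_primitive_mult[of \<Omega>] by blast
  define Q where "Q x = (if black x then P x else inverse (P x))" for x
  have "Q x * Q (x + ue k) = lam x k" for x k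
    unfolding Q_def black_add_ue P \<Omega>_def using P_nz[of x] nz[of x k] by (simp add: field_simps)
  moreover have "Q x \<noteq> 0" for x unfolding Q_def using P_nz by simp
  ultimately show ?thesis by blast
qed

lemma koenigs_imp_exact:
  fixes f :: "int^'m::finite \<Rightarrow> real^'n::finite"
  assumes m2: "CARD('m) \<ge> 2" and Qf: "is_Qnet f" and K: "is_Koenigs f"
  shows "\<exists>Q. q_exact f Q"
proof -
  obtain fs :: "int^'m \<Rightarrow> real^'n" where Qfs: "is_Qnet fs" and dual: "\<And>u i j. i \<noteq> j \<Longrightarrow>
        dual_quad (f u) (f (u + ue i)) (f (u + ue i + ue j)) (f (u + ue j))
                  (fs u) (fs (u + ue i)) (fs (u + ue i + ue j)) (fs (u + ue j))"
    using K unfolding is_Koenigs_def by blast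
  obtain lam where lam_nz: "\<And>x k. lam x k \<noteq> 0"
      and lam: "\<And>x k. fs (x + ue k) - fs x = lam x k *\<^sub>R (f (x + ue k) - f x)"
    using dual_edge_scaling[OF m2 Qfs dual] by blast
  have rel: "diag_ratio1 f u i j * lam (u + ue i) j = lam u i"
      "diag_ratio1 f u i j * lam (u + ue j) i = lam u j"
      "diag_ratio2 f u i j * lam u j = lam u i" if "i \<noteq> j" for u i j
    using dual_square_relations[OF Qf that lam dual[OF that]] by blast+
  have "lam x i * lam (x + ue j) i = lam x j * lam (x + ue i) j" for x i j
  proof (cases "i = j")
    case False
    \<comment> \<open>both sides equal r1 lam(x + e_i, j) lam(x + e_j, i)\<close>
    show ?thesis using rel(1,2)[OF False, of x] by (metis mult.assoc mult.commute)
  qed simp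
  then obtain Q where Q_nz: "\<And>x. Q x \<noteq> 0" and Q: "\<And>x k. Q x * Q (x + ue k) = lam x k"
    using checkerboard_factorization[of lam] lam_nz by blast
  have "diag_ratio1 f u i j = Q u / Q (u + ue i + ue j) \<and> diag_ratio2 f u i j = Q (u + ue i) / Q (u + ue j)"
    if "i \<noteq> j" for u i j
  proof
    have "Q (u + ue i) * (diag_ratio1 f u i j * Q (u + ue i + ue j)) = Q (u + ue i) * Q u"
      using rel(1)[OF that, of u] Q[of u i] Q[of "u + ue i" j] by (metis mult.assoc mult.commute)
    then show "diag_ratio1 f u i j = Q u / Q (u + ue i + ue j)" using Q_nz by (simp add: field_simps)
    have "Q u * (diag_ratio2 f u i j * Q (u + ue j)) = Q u * Q (u + ue i)"
      using rel(3)[OF that, of u] Q[of u i] Q[of u j] by (metis mult.assoc mult.commute)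
    then show "diag_ratio2 f u i j = Q (u + ue i) / Q (u + ue j)" using Q_nz by (simp add: field_simps)
  qed
  then show ?thesis using Q_nz q_exact_iff_ratios[OF Qf] by blast
qed

section \<open>Exact q yields a dual net\<close>

text \<open>If q = Q x / Q y, the vector form (Q x Q(x + e_k)) (f(x + e_k) - f(x)) is closed;
  in the diagonal frame of a square both paths from f to f_ij give
  (Q u Q_i - Q_i Q_ij) d2.\<close>
lemma dual_form_closed:
  fixes f :: "int^'m::finite \<Rightarrow> real^'n::finite"
  assumes Qf: "is_Qnet f" and ex: "q_exact f Q"
  shows "(Q x * Q (x + ue i)) *\<^sub>R (f (x + ue i) - f x)
       + (Q (x + ue i) * Q (x + ue i + ue j)) *\<^sub>R (f (x + ue i + ue j) - f (x + ue i))
       = (Q x * Q (x + ue j)) *\<^sub>R (f (x + ue j) - f x)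
       + (Q (x + ue j) * Q (x + ue j + ue i)) *\<^sub>R (f (x + ue j + ue i) - f (x + ue j))"
proof (cases "i = j")
  case False
  obtain M d1 d2 where A: "f x = M + d1" and B: "f (x + ue i) = M + d2"
      and C: "f (x + ue i + ue j) = M + diag_ratio1 f x i j *\<^sub>R d1"
      and D: "f (x + ue j) = M + diag_ratio2 f x i j *\<^sub>R d2"
    by (rule Qnet_square_coords[OF Qf False])
  have nz: "\<And>y. Q y \<noteq> 0" and r: "diag_ratio1 f x i j = Q x / Q (x + ue i + ue j)"
      "diag_ratio2 f x i j = Q (x + ue i) / Q (x + ue j)"
    using ex False unfolding q_exact_iff_ratios[OF Qf] by auto
  have ji: "x + ue j + ue i = x + ue i + ue j" by (simp add: add_ac)
  show ?thesis unfolding ji A B C D r using nz by (simp add: algebra_simps)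
qed simp

lemma dual_square_coords:
  fixes f fs :: "int^'m::finite \<Rightarrow> real^'n::finite"
  assumes Qf: "is_Qnet f" and ex: "q_exact f Q" and ij: "i \<noteq> j"
    and F: "\<And>x k. fs (x + ue k) = fs x + (Q x * Q (x + ue k)) *\<^sub>R (f (x + ue k) - f x)"
  obtains M d1 d2 where "indep2 d1 d2" "f u = M + d1" "f (u + ue i) = M + d2"
    "f (u + ue i + ue j) = M + (Q u / Q (u + ue i + ue j)) *\<^sub>R d1"
    "f (u + ue j) = M + (Q (u + ue i) / Q (u + ue j)) *\<^sub>R d2"
    "fs (u + ue i) = fs u + (Q u * Q (u + ue i)) *\<^sub>R (d2 - d1)"
    "fs (u + ue i + ue j) = fs u + (Q u * Q (u + ue i) - Q (u + ue i) * Q (u + ue i + ue j)) *\<^sub>R d2"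
    "fs (u + ue j) = fs u + (Q u * Q (u + ue i)) *\<^sub>R d2 - (Q u * Q (u + ue j)) *\<^sub>R d1"
    "Q u / Q (u + ue i + ue j) \<noteq> 1" "Q (u + ue i) / Q (u + ue j) \<noteq> 1"
proof -
  obtain M d1 d2 where ind: "indep2 d1 d2" and A: "f u = M + d1" and B: "f (u + ue i) = M + d2"
      and C: "f (u + ue i + ue j) = M + diag_ratio1 f u i j *\<^sub>R d1"
      and D: "f (u + ue j) = M + diag_ratio2 f u i j *\<^sub>R d2"
      and r1: "diag_ratio1 f u i j \<noteq> 1" and r2: "diag_ratio2 f u i j \<noteq> 1"
    by (rule Qnet_square_coords[OF Qf ij])
  have nz: "\<And>y. Q y \<noteq> 0" and r: "diag_ratio1 f u i j = Q u / Q (u + ue i + ue j)"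
      "diag_ratio2 f u i j = Q (u + ue i) / Q (u + ue j)"
    using ex ij unfolding q_exact_iff_ratios[OF Qf] by auto
  have "fs (u + ue i + ue j) = fs u + (Q u * Q (u + ue i)) *\<^sub>R (d2 - d1)
      + (Q (u + ue i) * Q (u + ue i + ue j)) *\<^sub>R (diag_ratio1 f u i j *\<^sub>R d1 - d2)"
    using F[of "u + ue i" j] F[of u i] unfolding A B C by simp
  then have "fs (u + ue i + ue j) = fs u + (Q u * Q (u + ue i) - Q (u + ue i) * Q (u + ue i + ue j)) *\<^sub>R d2"
    unfolding r using nz by (simp add: algebra_simps)
  moreover have "fs (u + ue j) = fs u + (Q u * Q (u + ue i)) *\<^sub>R d2 - (Q u * Q (u + ue j)) *\<^sub>R d1"
    using F[of u j] nz unfolding A D r by (simp add: algebra_simps)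
  moreover have "fs (u + ue i) = fs u + (Q u * Q (u + ue i)) *\<^sub>R (d2 - d1)"
    using F[of u i] unfolding A B by simp
  ultimately show ?thesis using that ind A B C D r r1 r2 by simp
qed

text \<open>The square of f* is non-degenerate: its diagonals meet in
  M* = f*(u) + Q u Q_i d2 with ratios Q_ij / Q_u and Q_j / Q_i.\<close>
lemma dual_square_nondeg:
  fixes f fs :: "int^'m::finite \<Rightarrow> real^'n::finite"
  assumes Qf: "is_Qnet f" and ex: "q_exact f Q" and ij: "i \<noteq> j"
    and F: "\<And>x k. fs (x + ue k) = fs x + (Q x * Q (x + ue k)) *\<^sub>R (f (x + ue k) - f x)"
  shows "nondeg_planar_quad (fs u) (fs (u + ue i)) (fs (u + ue i + ue j)) (fs (u + ue j))"
proof -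
  define qu q1 q2 q12 where "qu = Q u" "q1 = Q (u + ue i)" "q2 = Q (u + ue j)" "q12 = Q (u + ue i + ue j)"
  obtain M d1 d2 where ind: "indep2 d1 d2"
      and B: "fs (u + ue i) = fs u + (qu * q1) *\<^sub>R (d2 - d1)"
      and C: "fs (u + ue i + ue j) = fs u + (qu * q1 - q1 * q12) *\<^sub>R d2"
      and D: "fs (u + ue j) = fs u + (qu * q1) *\<^sub>R d2 - (qu * q2) *\<^sub>R d1"
      and r: "qu / q12 \<noteq> 1" "q1 / q2 \<noteq> 1"
    unfolding qu_q1_q2_q12_def by (rule dual_square_coords[OF Qf ex ij F])
  have nz: "qu \<noteq> 0" "q1 \<noteq> 0" "q2 \<noteq> 0" "q12 \<noteq> 0"
    using ex unfolding q_exact_def qu_q1_q2_q12_def by auto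
  define Ms where "Ms = fs u + (qu * q1) *\<^sub>R d2"
  have "diag_frame (fs u) (fs (u + ue i)) (fs (u + ue i + ue j)) (fs (u + ue j)) Ms (q12 / qu) (q2 / q1)"
    unfolding diag_frame_def
  proof (intro conjI)
    have e: "fs u - Ms = (- (qu * q1)) *\<^sub>R d2" "fs (u + ue i) - Ms = (- (qu * q1)) *\<^sub>R d1"
      unfolding Ms_def B by (simp_all add: algebra_simps)
    show "indep2 (fs u - Ms) (fs (u + ue i) - Ms)"
      unfolding indep2_def e
    proof (intro allI impI)
      fix \<alpha> \<beta> :: real
      assume "\<alpha> *\<^sub>R (- (qu * q1)) *\<^sub>R d2 + \<beta> *\<^sub>R (- (qu * q1)) *\<^sub>R d1 = 0"
      then have "(- (\<beta> * (qu * q1))) *\<^sub>R d1 + (- (\<alpha> * (qu * q1))) *\<^sub>R d2 = 0" by (simp add: algebra_simps)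
      then show "\<alpha> = 0 \<and> \<beta> = 0" using ind nz unfolding indep2_def by fastforce
    qed
    show "fs (u + ue i + ue j) - Ms = (q12 / qu) *\<^sub>R (fs u - Ms)"
      unfolding e C Ms_def using nz by (simp add: algebra_simps)
    have "fs (u + ue j) - Ms = (- (qu * q2)) *\<^sub>R d1" unfolding D Ms_def by simp
    then show "fs (u + ue j) - Ms = (q2 / q1) *\<^sub>R (fs (u + ue i) - Ms)"
      unfolding e using nz by simp
    show "q12 / qu \<noteq> 0" "q2 / q1 \<noteq> 0" "q12 / qu \<noteq> 1" "q2 / q1 \<noteq> 1" using nz r by auto
  qed
  then show ?thesis by (rule diag_frame_nondeg)
qed

text \<open>The square of f* is dual to the square of f: edges are parallel by construction, and the
  diagonals of the f*-square lie along d2 \<parallel> D - B and d1 \<parallel> C - A.\<close>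
lemma dual_square_dual:
  fixes f fs :: "int^'m::finite \<Rightarrow> real^'n::finite"
  assumes Qf: "is_Qnet f" and ex: "q_exact f Q" and ij: "i \<noteq> j"
    and F: "\<And>x k. fs (x + ue k) = fs x + (Q x * Q (x + ue k)) *\<^sub>R (f (x + ue k) - f x)"
  shows "dual_quad (f u) (f (u + ue i)) (f (u + ue i + ue j)) (f (u + ue j))
                   (fs u) (fs (u + ue i)) (fs (u + ue i + ue j)) (fs (u + ue j))"
proof -
  obtain M d1 d2 where A: "f u = M + d1" and B: "f (u + ue i) = M + d2"
      and C: "f (u + ue i + ue j) = M + (Q u / Q (u + ue i + ue j)) *\<^sub>R d1"
      and D: "f (u + ue j) = M + (Q (u + ue i) / Q (u + ue j)) *\<^sub>R d2"
      and Bs: "fs (u + ue i) = fs u + (Q u * Q (u + ue i)) *\<^sub>R (d2 - d1)"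
      and Cs: "fs (u + ue i + ue j) = fs u + (Q u * Q (u + ue i) - Q (u + ue i) * Q (u + ue i + ue j)) *\<^sub>R d2"
      and Ds: "fs (u + ue j) = fs u + (Q u * Q (u + ue i)) *\<^sub>R d2 - (Q u * Q (u + ue j)) *\<^sub>R d1"
      and r: "Q u / Q (u + ue i + ue j) \<noteq> 1" "Q (u + ue i) / Q (u + ue j) \<noteq> 1"
    by (rule dual_square_coords[OF Qf ex ij F])
  define r1 r2 where "r1 = Q u / Q (u + ue i + ue j)" and "r2 = Q (u + ue i) / Q (u + ue j)"
  have ji: "u + ue j + ue i = u + ue i + ue j" by (simp add: add_ac)
  have edge: "par (fs (x + ue k) - fs x) (f (x + ue k) - f x)" for x k
    unfolding par_def using F[of x k] by (intro exI[of _ "Q x * Q (x + ue k)"]) simp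
  have DB: "f (u + ue j) - f (u + ue i) = (r2 - 1) *\<^sub>R d2"
    unfolding B D r1_def r2_def by (simp add: algebra_simps)
  have par1: "par (fs (u + ue i + ue j) - fs u) (f (u + ue j) - f (u + ue i))"
    unfolding par_def Cs DB using r(2) unfolding r2_def[symmetric]
    by (intro exI[of _ "(Q u * Q (u + ue i) - Q (u + ue i) * Q (u + ue i + ue j)) / (r2 - 1)"]) simp
  have CA: "f (u + ue i + ue j) - f u = (r1 - 1) *\<^sub>R d1"
    unfolding A C r1_def r2_def by (simp add: algebra_simps)
  have "fs (u + ue j) - fs (u + ue i) = (Q u * Q (u + ue i) - Q u * Q (u + ue j)) *\<^sub>R d1"
    unfolding Bs Ds by (simp add: algebra_simps)
  then have par2: "par (fs (u + ue j) - fs (u + ue i)) (f (u + ue i + ue j) - f u)"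
    unfolding par_def CA using r(1) unfolding r1_def[symmetric]
    by (intro exI[of _ "(Q u * Q (u + ue i) - Q u * Q (u + ue j)) / (r1 - 1)"]) simp
  have "par (fs (u + ue j) - fs (u + ue i + ue j)) (f (u + ue j) - f (u + ue i + ue j))"
    "par (fs u - fs (u + ue j)) (f u - f (u + ue j))"
    using edge[of "u + ue j" i] edge[of u j] unfolding par_def ji
    by (metis minus_diff_eq scaleR_minus_right)+
  then show ?thesis unfolding dual_quad_def using edge[of u i] edge[of "u + ue i" j] par1 par2 by blast
qed

lemma exact_imp_koenigs:
  fixes f :: "int^'m::finite \<Rightarrow> real^'n::finite"
  assumes Qf: "is_Qnet f" and ex: "q_exact f Q"
  shows "is_Koenigs f"
proof -
  obtain fs :: "int^'m \<Rightarrow> real^'n"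
    where F: "\<And>x k. fs (x + ue k) = fs x + (Q x * Q (x + ue k)) *\<^sub>R (f (x + ue k) - f x)"
    using closed_form_primitive_add[of "\<lambda>x k. (Q x * Q (x + ue k)) *\<^sub>R (f (x + ue k) - f x)"]
      dual_form_closed[OF Qf ex] by blast
  then show ?thesis unfolding is_Koenigs_def is_Qnet_def
    using dual_square_nondeg[OF Qf ex _ F] dual_square_dual[OF Qf ex _ F] by blast
qed

theorem mainTheorem2:
  fixes f :: "int^'m::finite \<Rightarrow> real^'n::finite"
  assumes "CARD('m) \<ge> 2" and "CARD('n) \<ge> 3"
    and "is_Qnet f"
  shows "is_Koenigs f \<longleftrightarrow> closed_on black f \<and> closed_on white f"
proof
  assume "is_Koenigs f"
  then obtain Q where "q_exact f Q" using koenigs_imp_exact[OF assms(1,3)] by blast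
  then show "closed_on black f \<and> closed_on white f" using exact_imp_closed by blast
next
  assume "closed_on black f \<and> closed_on white f"
  then obtain Q where "q_exact f Q" using closed_imp_exact[OF assms(1,3)] by blast
  then show "is_Koenigs f" using exact_imp_koenigs[OF assms(3)] by blast
qed

end
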